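(* Let $(\mu_n)$ be a norm bounded sequence in $ba(\mathcal A)_+$, let $\Gamma(n)=\mathrm{co}(\mu_n,\mu_{n+1},\ldots)$ and $\lambda=\sum_n2^{-n}\mu_n$. There exist $\xi\in ba(\mathcal A,\lambda)_+$ and a sequence $(m_n)$ with $m_n\in\Gamma(n)$ for each $n$ such that, for every $k\in\mathbb N$, $\lim_n\|(\xi\wedge k\lambda)-(m_n\wedge k\lambda)\|=0$, and $\xi(A)\le\liminf_nm_n(A)$ for every $A\in\mathcal A$.
   Context: $\mathcal A$ algebra of subsets of $\Omega$; $ba(\mathcal A)$ the Banach lattice of bounded finitely additive real set functions with $\|\mu\|=|\mu|(\Omega)$, $ba(\mathcal A)_+$ its nonnegative elements and $\wedge$ the lattice infimum in $ba(\mathcal A)$. $\mathrm{co}$ denotes (finite) convex hull. $ba(\mathcal A,\lambda)_+$ is the set of nonnegative $\mu$ with $\mu\ll\lambda$, where $\mu\ll\lambda$ means for every $\varepsilon>0$ there is $\delta>0$ with $|\lambda|(A)<\delta\Rightarrow|\mu|(A)<\varepsilon$. *)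

theory Defs
  imports "HOL-Analysis.Analysis"
begin

text \<open>Set functions on an algebra A of subsets of Omega are modelled as
  functions of type 'a set => real; only their values on A matter.\<close>

definition fin_additive :: "'a set set \<Rightarrow> ('a set \<Rightarrow> real) \<Rightarrow> bool" where
  "fin_additive A \<mu> \<longleftrightarrow>
     (\<forall>B\<in>A. \<forall>C\<in>A. B \<inter> C = {} \<longrightarrow> \<mu> (B \<union> C) = \<mu> B + \<mu> C)"

definition tvar :: "'a set set \<Rightarrow> ('a set \<Rightarrow> real) \<Rightarrow> 'a set \<Rightarrow> real" where
  "tvar A \<mu> B = Sup {(\<Sum>C\<in>P. \<bar>\<mu> C\<bar>) | P. finite P \<and> P \<subseteq> A \<and> disjoint P \<and> \<Union>P = B}"

definition ba :: "'a set \<Rightarrow> 'a set set \<Rightarrow> ('a set \<Rightarrow> real) set" where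
  "ba \<Omega> A = {\<mu>. fin_additive A \<mu> \<and>
      bdd_above {(\<Sum>C\<in>P. \<bar>\<mu> C\<bar>) | P. finite P \<and> P \<subseteq> A \<and> disjoint P \<and> \<Union>P = \<Omega>}}"

definition ba_norm :: "'a set \<Rightarrow> 'a set set \<Rightarrow> ('a set \<Rightarrow> real) \<Rightarrow> real" where
  "ba_norm \<Omega> A \<mu> = tvar A \<mu> \<Omega>"

definition ba_pos :: "'a set \<Rightarrow> 'a set set \<Rightarrow> ('a set \<Rightarrow> real) set" where
  "ba_pos \<Omega> A = {\<mu> \<in> ba \<Omega> A. \<forall>B\<in>A. 0 \<le> \<mu> B}"

definition ba_inf :: "'a set set \<Rightarrow> ('a set \<Rightarrow> real) \<Rightarrow> ('a set \<Rightarrow> real) \<Rightarrow> 'a set \<Rightarrow> real" where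
  "ba_inf A \<mu> \<nu> B = Inf {\<mu> C + \<nu> (B - C) | C. C \<in> A \<and> C \<subseteq> B}"

definition abs_cont :: "'a set set \<Rightarrow> ('a set \<Rightarrow> real) \<Rightarrow> ('a set \<Rightarrow> real) \<Rightarrow> bool" where
  "abs_cont A \<mu> lam \<longleftrightarrow>
     (\<forall>\<epsilon>>0. \<exists>\<delta>>0. \<forall>B\<in>A. tvar A lam B < \<delta> \<longrightarrow> tvar A \<mu> B < \<epsilon>)"

definition ba_ac_pos :: "'a set \<Rightarrow> 'a set set \<Rightarrow> ('a set \<Rightarrow> real) \<Rightarrow> ('a set \<Rightarrow> real) set" where
  "ba_ac_pos \<Omega> A lam = {\<mu> \<in> ba_pos \<Omega> A. abs_cont A \<mu> lam}"

definition tail_co :: "(nat \<Rightarrow> 'a set \<Rightarrow> real) \<Rightarrow> nat \<Rightarrow> ('a set \<Rightarrow> real) set" where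
  "tail_co \<mu> n = {(\<lambda>B. \<Sum>i\<in>F. c i * \<mu> i B) | F c. finite F \<and> F \<noteq> {} \<and> F \<subseteq> {n..}
       \<and> (\<forall>i\<in>F. 0 \<le> c i) \<and> sum c F = 1}"

end

theory Submission
  imports Defs
begin

(* Komlos-type argument through a strictly concave functional. For m in ba(A)_+ put
   J(m) = inf over finite partitions P of  sum_{C in P} m(C) lam(C) / (m(C) + lam(C)).
   J is concave and bounded by lam(Omega), so its suprema over the decreasing convex sets
   Gamma(n) converge; m_n in Gamma(n) is chosen with J(m_n) almost maximal. For late n, p the
   midpoint of m_n and m_p lies in Gamma(N), so J gains almost nothing there, and the
   quantitative strict concavity of a |-> a l / (a + l) forces m_n /\ k lam and m_p /\ k lam
   to be close in norm. Their limits xi_k increase to xi with xi /\ k lam = xi_k;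
   xi << lam since xi_k <= k lam approximates xi uniformly, and xi <= liminf m_n since
   xi_k <= liminf (m_n /\ k lam). *)

section \<open>Partitions of an algebra of sets\<close>

definition alg_partition :: "'a set \<Rightarrow> 'a set set \<Rightarrow> 'a set set \<Rightarrow> bool" where
  "alg_partition \<Omega> A P \<longleftrightarrow> finite P \<and> P \<subseteq> A \<and> disjoint P \<and> \<Union>P = \<Omega>"

definition refines :: "'a set set \<Rightarrow> 'a set set \<Rightarrow> bool" where
  "refines R P \<longleftrightarrow> (\<forall>E\<in>R. \<exists>C\<in>P. E \<subseteq> C)"

definition superadditive :: "'a set set \<Rightarrow> ('a set \<Rightarrow> real) \<Rightarrow> bool" where
  "superadditive A F \<longleftrightarrow> (\<forall>X\<in>A. \<forall>Y\<in>A. X \<inter> Y = {} \<longrightarrow> F X + F Y \<le> F (X \<union> Y))"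

lemma alg_partitionD:
  assumes "alg_partition \<Omega> A P"
  shows "finite P" "P \<subseteq> A" "disjoint P" "\<Union>P = \<Omega>"
  using assms unfolding alg_partition_def by auto

lemma alg_partition_space: "algebra \<Omega> A \<Longrightarrow> alg_partition \<Omega> A {\<Omega>}"
  unfolding alg_partition_def disjoint_def using algebra.top by fastforce

lemma alg_partition_compl:
  assumes "algebra \<Omega> A" "D \<in> A"
  shows "alg_partition \<Omega> A {D, \<Omega> - D}"
proof -
  interpret algebra \<Omega> A by fact
  show ?thesis
    using assms(2) sets_into_space unfolding alg_partition_def disjoint_def by auto
qed

lemma alg_partition_common_refinementE:
  assumes alg: "algebra \<Omega> A" and P: "alg_partition \<Omega> A P" and Q: "alg_partition \<Omega> A Q"
  obtains R where "alg_partition \<Omega> A R" "refines R P" "refines R Q"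
proof
  interpret algebra \<Omega> A by fact
  let ?R = "(\<lambda>(C, D). C \<inter> D) ` (P \<times> Q)"
  note P' = alg_partitionD[OF P] and Q' = alg_partitionD[OF Q]
  have "X \<inter> Y = {}" if X: "X \<in> ?R" and Y: "Y \<in> ?R" and XY: "X \<noteq> Y" for X Y
  proof -
    obtain C D C' D' where "C \<in> P" "D \<in> Q" "X = C \<inter> D" "C' \<in> P" "D' \<in> Q" "Y = C' \<inter> D'"
      using X Y by auto
    with XY P'(3) Q'(3) show ?thesis unfolding disjoint_def by blast
  qed
  moreover have "\<Union>?R = \<Omega>" using P'(4) Q'(4) by blast
  ultimately show "alg_partition \<Omega> A ?R"
    using P' Q' unfolding alg_partition_def disjoint_def by auto
  show "refines ?R P" "refines ?R Q" unfolding refines_def by auto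
qed

lemma refines_trans: "refines R Q \<Longrightarrow> refines Q P \<Longrightarrow> refines R P"
  unfolding refines_def by (meson subset_trans)

lemma fin_additiveD:
  "fin_additive A \<nu> \<Longrightarrow> B \<in> A \<Longrightarrow> C \<in> A \<Longrightarrow> B \<inter> C = {} \<Longrightarrow> \<nu> (B \<union> C) = \<nu> B + \<nu> C"
  unfolding fin_additive_def by blast

lemma fin_additive_empty: "fin_additive A \<nu> \<Longrightarrow> {} \<in> A \<Longrightarrow> \<nu> {} = 0"
  using fin_additiveD[of A \<nu> "{}" "{}"] by simp

lemma superadditive_sum_le:
  assumes alg: "algebra \<Omega> A" and F0: "0 \<le> F {}" and sa: "superadditive A F"
    and "finite I" and "\<And>i. i \<in> I \<Longrightarrow> f i \<in> A"
    and "\<And>i j. i \<in> I \<Longrightarrow> j \<in> I \<Longrightarrow> i \<noteq> j \<Longrightarrow> f i \<inter> f j = {}"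
  shows "(\<Sum>i\<in>I. F (f i)) \<le> F (\<Union>i\<in>I. f i)"
  using assms(4-6)
proof (induction I rule: finite_induct)
  case empty
  then show ?case using F0 by simp
next
  case (insert x I)
  interpret algebra \<Omega> A by (rule alg)
  have "(\<Sum>i\<in>insert x I. F (f i)) \<le> F (f x) + F (\<Union>i\<in>I. f i)"
    using insert by simp
  also have "\<dots> \<le> F (f x \<union> (\<Union>i\<in>I. f i))"
  proof -
    have "f x \<in> A" "(\<Union>i\<in>I. f i) \<in> A" using insert.prems insert.hyps(1) by auto
    moreover have "f x \<inter> (\<Union>i\<in>I. f i) = {}" using insert.prems(2)[of x] insert.hyps(2) by auto
    ultimately show ?thesis using sa unfolding superadditive_def by blast
  qed
  finally show ?case by simp
qed

lemma superadditive_fin_additive: "fin_additive A \<nu> \<Longrightarrow> superadditive A \<nu>"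
  unfolding fin_additive_def superadditive_def by auto

lemma superadditive_uminus_fin_additive: "fin_additive A \<nu> \<Longrightarrow> superadditive A (\<lambda>X. - \<nu> X)"
  unfolding fin_additive_def superadditive_def by auto

lemma fin_additive_sum:
  assumes alg: "algebra \<Omega> A" and fa: "fin_additive A \<nu>"
    and fin: "finite I" and fA: "\<And>i. i \<in> I \<Longrightarrow> f i \<in> A"
    and dj: "\<And>i j. i \<in> I \<Longrightarrow> j \<in> I \<Longrightarrow> i \<noteq> j \<Longrightarrow> f i \<inter> f j = {}"
  shows "(\<Sum>i\<in>I. \<nu> (f i)) = \<nu> (\<Union>i\<in>I. f i)"
proof -
  interpret algebra \<Omega> A by (rule alg)
  have "\<nu> {} = 0" using fin_additive_empty[OF fa empty_sets] .
  then have "(\<Sum>i\<in>I. \<nu> (f i)) \<le> \<nu> (\<Union>i\<in>I. f i)"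
    and "(\<Sum>i\<in>I. - \<nu> (f i)) \<le> - \<nu> (\<Union>i\<in>I. f i)"
    using superadditive_sum_le[OF alg _ superadditive_fin_additive[OF fa] fin fA dj]
      superadditive_sum_le[OF alg _ superadditive_uminus_fin_additive[OF fa] fin fA dj]
    by auto
  then show ?thesis by (simp add: sum_negf)
qed

lemma fin_additive_partition_sum:
  assumes "algebra \<Omega> A" "fin_additive A \<nu>" "alg_partition \<Omega> A P"
  shows "(\<Sum>C\<in>P. \<nu> C) = \<nu> \<Omega>"
  using fin_additive_sum[OF assms(1,2), of P "\<lambda>X. X"] alg_partitionD[OF assms(3)]
  unfolding disjoint_def by auto

lemma superadditive_refines_sum_le:
  assumes alg: "algebra \<Omega> A" and F0: "F {} = 0" and sa: "superadditive A F"
    and P: "alg_partition \<Omega> A P" and R: "alg_partition \<Omega> A R" and ref: "refines R P"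
  shows "(\<Sum>E\<in>R. F E) \<le> (\<Sum>C\<in>P. F C)"
proof -
  interpret algebra \<Omega> A by (rule alg)
  note P' = alg_partitionD[OF P] and R' = alg_partitionD[OF R]
  have cell: "(\<Sum>C\<in>P. F (E \<inter> C)) = F E" if E: "E \<in> R" for E
  proof -
    obtain C0 where C0: "C0 \<in> P" "E \<subseteq> C0" using ref E unfolding refines_def by auto
    have "E \<inter> C = {}" if "C \<in> P - {C0}" for C
      using that C0 P'(3) unfolding disjoint_def by blast
    then have "(\<Sum>C\<in>P. F (E \<inter> C)) = F (E \<inter> C0)"
      using F0 P'(1) C0(1) by (subst sum.remove) (auto intro: sum.neutral)
    then show ?thesis using C0(2) by (simp add: Int_absorb2)
  qed
  have "(\<Sum>E\<in>R. F E) = (\<Sum>E\<in>R. \<Sum>C\<in>P. F (E \<inter> C))"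
    using cell by simp
  also have "\<dots> = (\<Sum>C\<in>P. \<Sum>E\<in>R. F (E \<inter> C))" by (rule sum.swap)
  also have "\<dots> \<le> (\<Sum>C\<in>P. F (\<Union>E\<in>R. E \<inter> C))"
  proof (rule sum_mono, rule superadditive_sum_le[OF alg _ sa R'(1)])
    show "E \<inter> C \<in> A" if "C \<in> P" "E \<in> R" for C E
      using that P'(2) R'(2) by auto
    show "E \<inter> C \<inter> (E' \<inter> C) = {}" if "E \<in> R" "E' \<in> R" "E \<noteq> E'" for C E E'
      using that R'(3) unfolding disjoint_def by blast
  qed (simp add: F0)
  also have "\<dots> = (\<Sum>C\<in>P. F C)"
  proof (rule sum.cong[OF refl])
    fix C assume "C \<in> P"
    then have "(\<Union>E\<in>R. E \<inter> C) = C" using P'(4) R'(4) by blast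
    then show "F (\<Union>E\<in>R. E \<inter> C) = F C" by simp
  qed
  finally show ?thesis .
qed

lemma sum_abs_diff_le_refines:
  assumes alg: "algebra \<Omega> A" and \<alpha>: "fin_additive A \<alpha>" and \<beta>: "fin_additive A \<beta>"
    and Q: "alg_partition \<Omega> A Q" and R: "alg_partition \<Omega> A R" and "refines R Q"
  shows "(\<Sum>E\<in>Q. \<bar>\<alpha> E - \<beta> E\<bar>) \<le> (\<Sum>E\<in>R. \<bar>\<alpha> E - \<beta> E\<bar>)"
proof -
  interpret algebra \<Omega> A by (rule alg)
  have "superadditive A (\<lambda>E. - \<bar>\<alpha> E - \<beta> E\<bar>)"
    unfolding superadditive_def using fin_additiveD[OF \<alpha>] fin_additiveD[OF \<beta>] by auto
  moreover have "\<alpha> {} = 0" "\<beta> {} = 0" using \<alpha> \<beta> by (auto intro: fin_additive_empty)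
  ultimately have "(\<Sum>E\<in>R. - \<bar>\<alpha> E - \<beta> E\<bar>) \<le> (\<Sum>E\<in>Q. - \<bar>\<alpha> E - \<beta> E\<bar>)"
    using superadditive_refines_sum_le[OF alg _ _ Q R assms(6)] by simp
  then show ?thesis by (simp add: sum_negf)
qed

lemma abs_le_of_alg_partition_sum_le:
  fixes f :: "'a set \<Rightarrow> real"
  assumes "algebra \<Omega> A" "B \<in> A"
    and "\<And>P. alg_partition \<Omega> A P \<Longrightarrow> (\<Sum>C\<in>P. \<bar>f C\<bar>) \<le> e"
  shows "\<bar>f B\<bar> \<le> e"
proof -
  have "\<bar>f B\<bar> \<le> (\<Sum>C\<in>{B, \<Omega> - B}. \<bar>f C\<bar>)" by (rule member_le_sum) simp_all
  also have "\<dots> \<le> e" using assms(3)[OF alg_partition_compl[OF assms(1,2)]] .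
  finally show ?thesis .
qed

section \<open>Nonnegative finitely additive set functions\<close>

definition nonneg_fa :: "'a set set \<Rightarrow> ('a set \<Rightarrow> real) \<Rightarrow> bool" where
  "nonneg_fa A \<nu> \<longleftrightarrow> fin_additive A \<nu> \<and> (\<forall>B\<in>A. 0 \<le> \<nu> B)"

lemma nonneg_faD:
  assumes "nonneg_fa A \<nu>"
  shows "fin_additive A \<nu>" "B \<in> A \<Longrightarrow> 0 \<le> \<nu> B"
  using assms unfolding nonneg_fa_def by auto

lemma nonneg_fa_empty:
  assumes "algebra \<Omega> A" "nonneg_fa A \<nu>"
  shows "\<nu> {} = 0"
proof -
  interpret algebra \<Omega> A by fact
  show ?thesis by (rule fin_additive_empty[OF nonneg_faD(1)[OF assms(2)] empty_sets])
qed

lemma nonneg_fa_scale: "nonneg_fa A \<nu> \<Longrightarrow> 0 \<le> c \<Longrightarrow> nonneg_fa A (\<lambda>B. c * \<nu> B)"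
  unfolding nonneg_fa_def fin_additive_def by (auto simp: distrib_left)

lemma nonneg_fa_mono:
  assumes "algebra \<Omega> A" "nonneg_fa A \<nu>" "B \<in> A" "C \<in> A" "B \<subseteq> C"
  shows "\<nu> B \<le> \<nu> C"
proof -
  interpret algebra \<Omega> A by fact
  have CB: "C - B \<in> A" using assms(3,4) by auto
  have "\<nu> C = \<nu> B + \<nu> (C - B)"
    using fin_additiveD[OF nonneg_faD(1)[OF assms(2)] assms(3) CB] assms(5)
    by (simp add: Un_absorb1)
  then show ?thesis using nonneg_faD(2)[OF assms(2) CB] by auto
qed

lemma nonneg_fa_diff_le_space:
  assumes alg: "algebra \<Omega> A" and f: "fin_additive A f" and g: "fin_additive A g"
    and le: "\<And>C. C \<in> A \<Longrightarrow> g C \<le> f C" and B: "B \<in> A"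
  shows "f B - g B \<le> f \<Omega> - g \<Omega>"
proof -
  interpret algebra \<Omega> A by (rule alg)
  have "nonneg_fa A (\<lambda>C. f C - g C)"
    unfolding nonneg_fa_def fin_additive_def using fin_additiveD[OF f] fin_additiveD[OF g] le
    by simp
  with nonneg_fa_mono[OF alg _ B top] sets_into_space[OF B] show ?thesis by simp
qed

lemma nonneg_fa_tendsto:
  assumes "algebra \<Omega> A" "\<And>n. nonneg_fa A (f n)" "\<And>B. B \<in> A \<Longrightarrow> (\<lambda>n. f n B) \<longlonglongrightarrow> g B"
  shows "nonneg_fa A g"
  unfolding nonneg_fa_def fin_additive_def
proof (intro conjI ballI impI)
  fix B assume "B \<in> A"
  then show "0 \<le> g B"
    using nonneg_faD(2)[OF assms(2)] by (intro LIMSEQ_le_const[OF assms(3)]) auto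
next
  fix B C assume B: "B \<in> A" and C: "C \<in> A" and BC: "B \<inter> C = {}"
  interpret algebra \<Omega> A by (rule assms(1))
  have "B \<union> C \<in> A" using B C by blast
  moreover have "(\<lambda>n. f n (B \<union> C)) = (\<lambda>n. f n B + f n C)"
    using fin_additiveD[OF nonneg_faD(1)[OF assms(2)] B C BC] by simp
  ultimately show "g (B \<union> C) = g B + g C"
    using assms(3)[of "B \<union> C"] tendsto_add[OF assms(3)[OF B] assms(3)[OF C]] LIMSEQ_unique by metis
qed

lemma tvar_nonneg_fa:
  assumes alg: "algebra \<Omega> A" and \<nu>: "nonneg_fa A \<nu>" and B: "B \<in> A"
  shows "tvar A \<nu> B = \<nu> B"
proof -
  let ?S = "{(\<Sum>C\<in>P. \<bar>\<nu> C\<bar>) | P. finite P \<and> P \<subseteq> A \<and> disjoint P \<and> \<Union>P = B}"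
  have "(\<Sum>C\<in>P. \<bar>\<nu> C\<bar>) = \<nu> B"
    if "finite P" "P \<subseteq> A" "disjoint P" "\<Union>P = B" for P
  proof -
    have "(\<Sum>C\<in>P. \<bar>\<nu> C\<bar>) = (\<Sum>C\<in>P. \<nu> C)"
      using that(2) nonneg_faD(2)[OF \<nu>] by (intro sum.cong) auto
    also have "\<dots> = \<nu> (\<Union>C\<in>P. C)"
      using fin_additive_sum[OF alg nonneg_faD(1)[OF \<nu>] that(1), of "\<lambda>X. X"] that(2,3)
      unfolding disjoint_def by auto
    finally show ?thesis using that(4) by simp
  qed
  then have "?S \<subseteq> {\<nu> B}" by blast
  moreover have "\<nu> B \<in> ?S"
    using B nonneg_faD(2)[OF \<nu> B] unfolding disjoint_def
    by (intro CollectI exI[of _ "{B}"]) simp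
  ultimately have "?S = {\<nu> B}" by blast
  then show ?thesis unfolding tvar_def by simp
qed

lemma ba_pos_iff_nonneg_fa:
  assumes alg: "algebra \<Omega> A"
  shows "\<nu> \<in> ba_pos \<Omega> A \<longleftrightarrow> nonneg_fa A \<nu>"
proof
  assume \<nu>: "nonneg_fa A \<nu>"
  have "(\<Sum>C\<in>P. \<bar>\<nu> C\<bar>) \<le> \<nu> \<Omega>" if P: "alg_partition \<Omega> A P" for P
  proof -
    have "(\<Sum>C\<in>P. \<bar>\<nu> C\<bar>) = (\<Sum>C\<in>P. \<nu> C)"
      using alg_partitionD(2)[OF P] nonneg_faD(2)[OF \<nu>] by (intro sum.cong) auto
    also have "\<dots> = \<nu> \<Omega>" by (rule fin_additive_partition_sum[OF alg nonneg_faD(1)[OF \<nu>] P])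
    finally show ?thesis by simp
  qed
  then have "bdd_above {(\<Sum>C\<in>P. \<bar>\<nu> C\<bar>) | P. finite P \<and> P \<subseteq> A \<and> disjoint P \<and> \<Union>P = \<Omega>}"
    unfolding alg_partition_def by (intro bdd_aboveI[of _ "\<nu> \<Omega>"]) blast
  then show "\<nu> \<in> ba_pos \<Omega> A" using \<nu> unfolding ba_pos_def ba_def nonneg_fa_def by blast
qed (simp add: ba_pos_def ba_def nonneg_fa_def)

lemma abs_ba_norm_le:
  assumes alg: "algebra \<Omega> A" and bound: "\<And>P. alg_partition \<Omega> A P \<Longrightarrow> (\<Sum>C\<in>P. \<bar>\<rho> C\<bar>) \<le> e"
  shows "\<bar>ba_norm \<Omega> A \<rho>\<bar> \<le> e"
proof -
  let ?S = "{(\<Sum>C\<in>P. \<bar>\<rho> C\<bar>) | P. finite P \<and> P \<subseteq> A \<and> disjoint P \<and> \<Union>P = \<Omega>}"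
  have le: "x \<le> e" if "x \<in> ?S" for x using that bound unfolding alg_partition_def by blast
  have mem: "\<bar>\<rho> \<Omega>\<bar> \<in> ?S"
    using alg_partition_space[OF alg] unfolding alg_partition_def
    by (intro CollectI exI[of _ "{\<Omega>}"]) simp
  have "0 \<le> Sup ?S"
    using cSup_upper[OF mem bdd_aboveI[OF le]] abs_ge_zero order_trans by blast
  moreover have "Sup ?S \<le> e" using mem le by (intro cSup_least) auto
  ultimately have "\<bar>Sup ?S\<bar> \<le> e" by simp
  then show ?thesis unfolding ba_norm_def tvar_def by simp
qed

section \<open>The lattice infimum\<close>

lemma ba_inf_set_nonempty_bdd_below:
  assumes alg: "algebra \<Omega> A" and \<mu>: "nonneg_fa A \<mu>" and \<nu>: "nonneg_fa A \<nu>" and B: "B \<in> A"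
  shows "{\<mu> C + \<nu> (B - C) | C. C \<in> A \<and> C \<subseteq> B} \<noteq> {}"
    and "bdd_below {\<mu> C + \<nu> (B - C) | C. C \<in> A \<and> C \<subseteq> B}"
proof -
  interpret algebra \<Omega> A by fact
  show "{\<mu> C + \<nu> (B - C) | C. C \<in> A \<and> C \<subseteq> B} \<noteq> {}" by auto
  show "bdd_below {\<mu> C + \<nu> (B - C) | C. C \<in> A \<and> C \<subseteq> B}"
    using B nonneg_faD(2)[OF \<mu>] nonneg_faD(2)[OF \<nu>]
    by (intro bdd_belowI[of _ 0]) (auto intro!: add_nonneg_nonneg)
qed

lemma ba_inf_le:
  assumes "algebra \<Omega> A" "nonneg_fa A \<mu>" "nonneg_fa A \<nu>" "B \<in> A" "D \<in> A" "D \<subseteq> B"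
  shows "ba_inf A \<mu> \<nu> B \<le> \<mu> D + \<nu> (B - D)"
  unfolding ba_inf_def using ba_inf_set_nonempty_bdd_below(2)[OF assms(1-4)] assms(5,6)
  by (intro cInf_lower) auto

lemma ba_inf_greatest:
  assumes "algebra \<Omega> A" "nonneg_fa A \<mu>" "nonneg_fa A \<nu>" "B \<in> A"
    and "\<And>D. D \<in> A \<Longrightarrow> D \<subseteq> B \<Longrightarrow> x \<le> \<mu> D + \<nu> (B - D)"
  shows "x \<le> ba_inf A \<mu> \<nu> B"
  unfolding ba_inf_def using ba_inf_set_nonempty_bdd_below(1)[OF assms(1-4)] assms(5)
  by (intro cInf_greatest) auto

lemma ba_inf_approx:
  assumes "algebra \<Omega> A" "nonneg_fa A \<mu>" "nonneg_fa A \<nu>" "B \<in> A" "0 < e"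
  obtains D where "D \<in> A" "D \<subseteq> B" "\<mu> D + \<nu> (B - D) < ba_inf A \<mu> \<nu> B + e"
proof -
  have "Inf {\<mu> C + \<nu> (B - C) | C. C \<in> A \<and> C \<subseteq> B} < ba_inf A \<mu> \<nu> B + e"
    using assms(5) unfolding ba_inf_def by simp
  from cInf_lessD[OF ba_inf_set_nonempty_bdd_below(1)[OF assms(1-4)] this] that show ?thesis
    by blast
qed

lemma ba_inf_bounds:
  assumes alg: "algebra \<Omega> A" and \<mu>: "nonneg_fa A \<mu>" and \<nu>: "nonneg_fa A \<nu>" and B: "B \<in> A"
  shows "0 \<le> ba_inf A \<mu> \<nu> B" "ba_inf A \<mu> \<nu> B \<le> \<mu> B" "ba_inf A \<mu> \<nu> B \<le> \<nu> B"
proof -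
  interpret algebra \<Omega> A by fact
  show "0 \<le> ba_inf A \<mu> \<nu> B"
    using B nonneg_faD(2)[OF \<mu>] nonneg_faD(2)[OF \<nu>]
    by (intro ba_inf_greatest[OF assms] add_nonneg_nonneg) auto
  show "ba_inf A \<mu> \<nu> B \<le> \<mu> B" "ba_inf A \<mu> \<nu> B \<le> \<nu> B"
    using ba_inf_le[OF assms B order_refl] ba_inf_le[OF assms empty_sets]
      nonneg_fa_empty[OF alg \<mu>] nonneg_fa_empty[OF alg \<nu>] by auto
qed

lemma ba_inf_mono_right:
  assumes alg: "algebra \<Omega> A" and \<mu>: "nonneg_fa A \<mu>" and \<nu>: "nonneg_fa A \<nu>"
    and \<nu>': "nonneg_fa A \<nu>'" and le: "\<And>C. C \<in> A \<Longrightarrow> \<nu> C \<le> \<nu>' C" and B: "B \<in> A"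
  shows "ba_inf A \<mu> \<nu> B \<le> ba_inf A \<mu> \<nu>' B"
proof (rule ba_inf_greatest[OF alg \<mu> \<nu>' B])
  interpret algebra \<Omega> A by fact
  fix D assume D: "D \<in> A" "D \<subseteq> B"
  have "ba_inf A \<mu> \<nu> B \<le> \<mu> D + \<nu> (B - D)" by (rule ba_inf_le[OF alg \<mu> \<nu> B D])
  also have "\<dots> \<le> \<mu> D + \<nu>' (B - D)" using le B D by auto
  finally show "ba_inf A \<mu> \<nu> B \<le> \<mu> D + \<nu>' (B - D)" .
qed

lemma ba_inf_union_le:
  assumes alg: "algebra \<Omega> A" and \<mu>: "nonneg_fa A \<mu>" and \<nu>: "nonneg_fa A \<nu>"
    and B: "B \<in> A" and C: "C \<in> A" and BC: "B \<inter> C = {}"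
  shows "ba_inf A \<mu> \<nu> (B \<union> C) \<le> ba_inf A \<mu> \<nu> B + ba_inf A \<mu> \<nu> C"
proof -
  interpret algebra \<Omega> A by fact
  note add\<mu> = fin_additiveD[OF nonneg_faD(1)[OF \<mu>]] and add\<nu> = fin_additiveD[OF nonneg_faD(1)[OF \<nu>]]
  have "ba_inf A \<mu> \<nu> (B \<union> C) - (\<mu> D1 + \<nu> (B - D1)) \<le> ba_inf A \<mu> \<nu> C"
    if D1: "D1 \<in> A" "D1 \<subseteq> B" for D1
  proof (rule ba_inf_greatest[OF alg \<mu> \<nu> C])
    fix D2 assume D2: "D2 \<in> A" "D2 \<subseteq> C"
    have "ba_inf A \<mu> \<nu> (B \<union> C) \<le> \<mu> (D1 \<union> D2) + \<nu> ((B \<union> C) - (D1 \<union> D2))"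
      using B C D1 D2 by (intro ba_inf_le[OF alg \<mu> \<nu>]) auto
    also have "(B \<union> C) - (D1 \<union> D2) = (B - D1) \<union> (C - D2)" using D1 D2 BC by auto
    also have "\<mu> (D1 \<union> D2) = \<mu> D1 + \<mu> D2" using D1 D2 BC by (intro add\<mu>) auto
    also have "\<nu> ((B - D1) \<union> (C - D2)) = \<nu> (B - D1) + \<nu> (C - D2)"
      using B C D1 D2 BC by (intro add\<nu>) auto
    finally show "ba_inf A \<mu> \<nu> (B \<union> C) - (\<mu> D1 + \<nu> (B - D1)) \<le> \<mu> D2 + \<nu> (C - D2)"
      by linarith
  qed
  then have "ba_inf A \<mu> \<nu> (B \<union> C) - ba_inf A \<mu> \<nu> C \<le> ba_inf A \<mu> \<nu> B"
    by (intro ba_inf_greatest[OF alg \<mu> \<nu> B]) (simp add: algebra_simps)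
  then show ?thesis by linarith
qed

lemma ba_inf_union_ge:
  assumes alg: "algebra \<Omega> A" and \<mu>: "nonneg_fa A \<mu>" and \<nu>: "nonneg_fa A \<nu>"
    and B: "B \<in> A" and C: "C \<in> A" and BC: "B \<inter> C = {}"
  shows "ba_inf A \<mu> \<nu> B + ba_inf A \<mu> \<nu> C \<le> ba_inf A \<mu> \<nu> (B \<union> C)"
proof -
  interpret algebra \<Omega> A by fact
  note add\<mu> = fin_additiveD[OF nonneg_faD(1)[OF \<mu>]] and add\<nu> = fin_additiveD[OF nonneg_faD(1)[OF \<nu>]]
  show ?thesis
  proof (rule ba_inf_greatest[OF alg \<mu> \<nu>])
    fix D assume D: "D \<in> A" "D \<subseteq> B \<union> C"
    have "ba_inf A \<mu> \<nu> B + ba_inf A \<mu> \<nu> C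
        \<le> (\<mu> (D \<inter> B) + \<nu> (B - D \<inter> B)) + (\<mu> (D \<inter> C) + \<nu> (C - D \<inter> C))"
      using B C D by (intro add_mono ba_inf_le[OF alg \<mu> \<nu>]) auto
    moreover have "\<mu> (D \<inter> B) + \<mu> (D \<inter> C) = \<mu> D"
    proof -
      have "D \<inter> B \<in> A" "D \<inter> C \<in> A" "D \<inter> B \<inter> (D \<inter> C) = {}" using B C D BC by auto
      moreover have "(D \<inter> B) \<union> (D \<inter> C) = D" using D by auto
      ultimately show ?thesis using add\<mu> by metis
    qed
    moreover have "\<nu> (B - D \<inter> B) + \<nu> (C - D \<inter> C) = \<nu> (B \<union> C - D)"
    proof -
      have "B - D \<inter> B \<in> A" "C - D \<inter> C \<in> A" "(B - D \<inter> B) \<inter> (C - D \<inter> C) = {}"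
        using B C D BC by auto
      moreover have "(B - D \<inter> B) \<union> (C - D \<inter> C) = B \<union> C - D" by auto
      ultimately show ?thesis using add\<nu> by metis
    qed
    ultimately show "ba_inf A \<mu> \<nu> B + ba_inf A \<mu> \<nu> C \<le> \<mu> D + \<nu> (B \<union> C - D)" by linarith
  qed (use B C in auto)
qed

lemma nonneg_fa_ba_inf:
  assumes "algebra \<Omega> A" "nonneg_fa A \<mu>" "nonneg_fa A \<nu>"
  shows "nonneg_fa A (ba_inf A \<mu> \<nu>)"
  unfolding nonneg_fa_def fin_additive_def
  using ba_inf_union_le[OF assms] ba_inf_union_ge[OF assms] ba_inf_bounds(1)[OF assms]
  by (auto intro: antisym)

lemma superadditive_min:
  assumes "fin_additive A \<mu>" "fin_additive A \<nu>"
  shows "superadditive A (\<lambda>C. min (\<mu> C) (\<nu> C))"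
  using assms unfolding superadditive_def fin_additive_def by (auto simp: min_def)

lemma ba_inf_approx_partition:
  assumes alg: "algebra \<Omega> A" and \<mu>: "nonneg_fa A \<mu>" and \<nu>: "nonneg_fa A \<nu>" and e: "0 < e"
  obtains P where "alg_partition \<Omega> A P" "(\<Sum>C\<in>P. min (\<mu> C) (\<nu> C)) < ba_inf A \<mu> \<nu> \<Omega> + e"
proof -
  interpret algebra \<Omega> A by fact
  obtain D where D: "D \<in> A" "D \<subseteq> \<Omega>" and Dv: "\<mu> D + \<nu> (\<Omega> - D) < ba_inf A \<mu> \<nu> \<Omega> + e"
    using ba_inf_approx[OF alg \<mu> \<nu> top e] by blast
  have "(\<Sum>C\<in>{D, \<Omega> - D}. min (\<mu> C) (\<nu> C)) \<le> \<mu> D + \<nu> (\<Omega> - D)"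
  proof (cases "D = \<Omega> - D")
    case True
    then show ?thesis using nonneg_faD(2)[OF \<nu>, of "\<Omega> - D"] D by auto
  qed (simp add: add_mono)
  then show ?thesis using that alg_partition_compl[OF alg D(1)] Dv by fastforce
qed

lemma sum_min_diff_sum_ba_inf_less:
  assumes alg: "algebra \<Omega> A" and \<gamma>: "nonneg_fa A \<gamma>" and \<nu>: "nonneg_fa A \<nu>"
    and R: "alg_partition \<Omega> A R" and P: "alg_partition \<Omega> A P" "refines R P"
    and approx: "(\<Sum>C\<in>P. min (\<gamma> C) (\<nu> C)) < ba_inf A \<gamma> \<nu> \<Omega> + e"
  shows "(\<Sum>E\<in>R. min (\<gamma> E) (\<nu> E)) - (\<Sum>E\<in>R. ba_inf A \<gamma> \<nu> E) < e"
proof -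
  have "(\<Sum>E\<in>R. min (\<gamma> E) (\<nu> E)) \<le> (\<Sum>E\<in>P. min (\<gamma> E) (\<nu> E))"
    using nonneg_fa_empty[OF alg \<gamma>] nonneg_fa_empty[OF alg \<nu>]
    by (intro superadditive_refines_sum_le[OF alg _ superadditive_min P(1) R P(2)]
        nonneg_faD(1)[OF \<gamma>] nonneg_faD(1)[OF \<nu>]) simp
  moreover have "(\<Sum>E\<in>R. ba_inf A \<gamma> \<nu> E) = ba_inf A \<gamma> \<nu> \<Omega>"
    using fin_additive_partition_sum[OF alg nonneg_faD(1)[OF nonneg_fa_ba_inf[OF alg \<gamma> \<nu>]] R] .
  ultimately show ?thesis using approx by linarith
qed

lemma sum_abs_ba_inf_diff_le:
  assumes alg: "algebra \<Omega> A" and \<alpha>: "nonneg_fa A \<alpha>" and \<beta>: "nonneg_fa A \<beta>" and \<nu>: "nonneg_fa A \<nu>"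
    and Q: "alg_partition \<Omega> A Q" and R: "alg_partition \<Omega> A R" and "refines R Q"
    and P1: "alg_partition \<Omega> A P1" "refines R P1"
      "(\<Sum>C\<in>P1. min (\<alpha> C) (\<nu> C)) < ba_inf A \<alpha> \<nu> \<Omega> + e"
    and P2: "alg_partition \<Omega> A P2" "refines R P2"
      "(\<Sum>C\<in>P2. min (\<beta> C) (\<nu> C)) < ba_inf A \<beta> \<nu> \<Omega> + e"
  shows "(\<Sum>E\<in>Q. \<bar>ba_inf A \<alpha> \<nu> E - ba_inf A \<beta> \<nu> E\<bar>)
    \<le> (\<Sum>E\<in>R. \<bar>min (\<alpha> E) (\<nu> E) - min (\<beta> E) (\<nu> E)\<bar>) + 2 * e"
proof -
  define \<alpha>' where "\<alpha>' = ba_inf A \<alpha> \<nu>"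
  define \<beta>' where "\<beta>' = ba_inf A \<beta> \<nu>"
  have \<alpha>': "nonneg_fa A \<alpha>'" and \<beta>': "nonneg_fa A \<beta>'"
    unfolding \<alpha>'_def \<beta>'_def using nonneg_fa_ba_inf[OF alg] \<alpha> \<beta> \<nu> by auto
  have cell: "\<alpha>' E \<le> min (\<alpha> E) (\<nu> E)" "\<beta>' E \<le> min (\<beta> E) (\<nu> E)" if "E \<in> R" for E
    using ba_inf_bounds[OF alg _ \<nu>] alg_partitionD(2)[OF R] that \<alpha> \<beta>
    unfolding \<alpha>'_def \<beta>'_def by auto
  have "(\<Sum>E\<in>Q. \<bar>\<alpha>' E - \<beta>' E\<bar>) \<le> (\<Sum>E\<in>R. \<bar>\<alpha>' E - \<beta>' E\<bar>)"
    by (rule sum_abs_diff_le_refines[OF alg nonneg_faD(1)[OF \<alpha>'] nonneg_faD(1)[OF \<beta>'] Q R assms(7)])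
  also have "\<dots> \<le> (\<Sum>E\<in>R. \<bar>min (\<alpha> E) (\<nu> E) - min (\<beta> E) (\<nu> E)\<bar>
      + (min (\<alpha> E) (\<nu> E) - \<alpha>' E) + (min (\<beta> E) (\<nu> E) - \<beta>' E))"
  proof (rule sum_mono)
    fix E assume "E \<in> R"
    then show "\<bar>\<alpha>' E - \<beta>' E\<bar> \<le> \<bar>min (\<alpha> E) (\<nu> E) - min (\<beta> E) (\<nu> E)\<bar>
        + (min (\<alpha> E) (\<nu> E) - \<alpha>' E) + (min (\<beta> E) (\<nu> E) - \<beta>' E)"
      using cell[OF \<open>E \<in> R\<close>] abs_ge_self[of "min (\<alpha> E) (\<nu> E) - min (\<beta> E) (\<nu> E)"]
        abs_ge_minus_self[of "min (\<alpha> E) (\<nu> E) - min (\<beta> E) (\<nu> E)"]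
      unfolding abs_le_iff by (intro conjI) linarith+
  qed
  also have "\<dots> = (\<Sum>E\<in>R. \<bar>min (\<alpha> E) (\<nu> E) - min (\<beta> E) (\<nu> E)\<bar>)
      + ((\<Sum>E\<in>R. min (\<alpha> E) (\<nu> E)) - (\<Sum>E\<in>R. \<alpha>' E))
      + ((\<Sum>E\<in>R. min (\<beta> E) (\<nu> E)) - (\<Sum>E\<in>R. \<beta>' E))"
    by (simp add: sum.distrib sum_subtractf)
  also have "\<dots> \<le> (\<Sum>E\<in>R. \<bar>min (\<alpha> E) (\<nu> E) - min (\<beta> E) (\<nu> E)\<bar>) + 2 * e"
    using sum_min_diff_sum_ba_inf_less[OF alg \<alpha> \<nu> R P1]
      sum_min_diff_sum_ba_inf_less[OF alg \<beta> \<nu> R P2]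
    unfolding \<alpha>'_def \<beta>'_def by linarith
  finally show ?thesis unfolding \<alpha>'_def \<beta>'_def .
qed

section \<open>The parallel sum\<close>

text \<open>\<open>par_sum a l = (a\<inverse> + l\<inverse>)\<inverse>\<close> for positive arguments; the junk value at
  \<open>a + l = 0\<close> is \<open>0\<close>.\<close>

definition par_sum :: "real \<Rightarrow> real \<Rightarrow> real" where
  "par_sum a l = a * l / (a + l)"

definition midpoint_gain :: "real \<Rightarrow> real \<Rightarrow> real \<Rightarrow> real" where
  "midpoint_gain a b l = par_sum ((a + b) / 2) l - (par_sum a l + par_sum b l) / 2"

lemma par_sum_nonneg: "0 \<le> a \<Longrightarrow> 0 \<le> l \<Longrightarrow> 0 \<le> par_sum a l"
  unfolding par_sum_def by simp

lemma par_sum_le_right: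
  assumes "0 \<le> a" "0 \<le> l"
  shows "par_sum a l \<le> l"
proof (cases "a + l = 0")
  case False
  then have "0 < a + l" using assms by simp
  moreover have "a * l \<le> l * (a + l)" using assms by (simp add: algebra_simps)
  ultimately show ?thesis unfolding par_sum_def by (simp add: divide_le_eq)
qed (use assms in \<open>simp add: par_sum_def\<close>)

lemma par_sum_superadditive:
  assumes "0 \<le> a1" "0 \<le> a2" "0 \<le> l1" "0 \<le> l2"
  shows "par_sum a1 l1 + par_sum a2 l2 \<le> par_sum (a1 + a2) (l1 + l2)"
proof (cases "a1 + l1 = 0 \<or> a2 + l2 = 0")
  case True
  then have "a1 = 0 \<and> l1 = 0 \<or> a2 = 0 \<and> l2 = 0" using assms by linarith
  then show ?thesis by (auto simp: par_sum_def)
next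
  case False
  then have p1: "0 < a1 + l1" and p2: "0 < a2 + l2" using assms by auto
  let ?S = "a1 + a2 + (l1 + l2)"
  have p3: "0 < ?S" using p1 p2 by simp
  have e1: "par_sum a1 l1 * (a1 + l1) = a1 * l1" and e2: "par_sum a2 l2 * (a2 + l2) = a2 * l2"
    and e3: "par_sum (a1 + a2) (l1 + l2) * ?S = (a1 + a2) * (l1 + l2)"
    using p1 p2 p3 unfolding par_sum_def by simp_all
  have "(par_sum (a1 + a2) (l1 + l2) - par_sum a1 l1 - par_sum a2 l2) * ((a1 + l1) * (a2 + l2) * ?S)
     = (par_sum (a1 + a2) (l1 + l2) * ?S) * (a1 + l1) * (a2 + l2)
       - (par_sum a1 l1 * (a1 + l1)) * (a2 + l2) * ?S - (par_sum a2 l2 * (a2 + l2)) * (a1 + l1) * ?S"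
    by (simp add: algebra_simps)
  also have "\<dots> = (a1 * l2 - a2 * l1)\<^sup>2" unfolding e1 e2 e3
    by (simp add: algebra_simps power2_eq_square)
  finally have "(par_sum (a1 + a2) (l1 + l2) - par_sum a1 l1 - par_sum a2 l2)
      * ((a1 + l1) * (a2 + l2) * ?S) = (a1 * l2 - a2 * l1)\<^sup>2" .
  moreover have "0 < (a1 + l1) * (a2 + l2) * ?S" using p1 p2 p3 by simp
  ultimately have "0 \<le> par_sum (a1 + a2) (l1 + l2) - par_sum a1 l1 - par_sum a2 l2"
    by (metis zero_le_mult_iff zero_le_power2 not_less)
  then show ?thesis by linarith
qed

lemma superadditive_par_sum:
  assumes "nonneg_fa A m" "nonneg_fa A l"
  shows "superadditive A (\<lambda>C. par_sum (m C) (l C))"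
  unfolding superadditive_def
proof (intro ballI impI)
  fix X Y assume "X \<in> A" "Y \<in> A" "X \<inter> Y = {}"
  then show "par_sum (m X) (l X) + par_sum (m Y) (l Y) \<le> par_sum (m (X \<union> Y)) (l (X \<union> Y))"
    using fin_additiveD[OF nonneg_faD(1)[OF assms(1)]] fin_additiveD[OF nonneg_faD(1)[OF assms(2)]]
      nonneg_faD(2)[OF assms(1)] nonneg_faD(2)[OF assms(2)]
    by (simp add: par_sum_superadditive)
qed

text \<open>Quantitative strict concavity of \<open>par_sum\<close> in its first argument.\<close>

lemma midpoint_gain_identity:
  assumes "0 \<le> a" "0 \<le> b" "0 < l"
  shows "midpoint_gain a b l * (2 * (a + l) * (b + l) * (a + b + 2 * l)) = l\<^sup>2 * (a - b)\<^sup>2"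
proof -
  have "0 < a + l" "0 < b + l" using assms by auto
  moreover have "0 < (a + b) / 2 + l" using assms by (intro add_nonneg_pos) auto
  ultimately
  have "par_sum a l * (a + l) = a * l" "par_sum b l * (b + l) = b * l"
    and mid: "par_sum ((a + b) / 2) l * (a + b + 2 * l) = (a + b) * l"
    unfolding par_sum_def by (simp_all add: field_simps)
  have "midpoint_gain a b l * (2 * (a + l) * (b + l) * (a + b + 2 * l))
     = 2 * (par_sum ((a + b) / 2) l * (a + b + 2 * l)) * (a + l) * (b + l)
       - (par_sum a l * (a + l)) * (b + l) * (a + b + 2 * l)
       - (par_sum b l * (b + l)) * (a + l) * (a + b + 2 * l)"
    unfolding midpoint_gain_def by (simp add: field_simps)
  also have "\<dots> = l\<^sup>2 * (a - b)\<^sup>2"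
    unfolding mid \<open>par_sum a l * (a + l) = a * l\<close> \<open>par_sum b l * (b + l) = b * l\<close>
    by (simp add: algebra_simps power2_eq_square)
  finally show ?thesis .
qed

lemma midpoint_gain_nonneg:
  assumes "0 \<le> a" "0 \<le> b" "0 \<le> l"
  shows "0 \<le> midpoint_gain a b l"
proof (cases "l = 0")
  case False
  then have l: "0 < l" using assms by simp
  have "0 < 2 * (a + l) * (b + l) * (a + b + 2 * l)" using assms l by simp
  with midpoint_gain_identity[OF assms(1,2) l] show ?thesis
    by (metis zero_le_mult_iff zero_le_power2 not_less)
qed (simp add: midpoint_gain_def par_sum_def)

lemma min_diff_mult_le:
  fixes a b l k t :: real
  assumes "0 \<le> b" "b \<le> a" "0 \<le> l" "0 \<le> k" "0 \<le> t"
  shows "(min a (k * l) - min b (k * l)) * (a + t * b + (1 + t) * l) \<le> (2 + t) * (k + 1) * l * (a - b)"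
proof -
  consider "a \<le> k * l" | "k * l \<le> b" | "b < k * l" "k * l < a" by linarith
  then show ?thesis
  proof cases
    case 1
    have "t * b \<le> t * (k * l)" using 1 assms by (intro mult_left_mono) auto
    then have "a + t * b + (1 + t) * l \<le> (1 + t) * (k + 1) * l"
      using 1 by (simp add: algebra_simps)
    also have "\<dots> \<le> (2 + t) * (k + 1) * l" using assms by (simp add: mult_right_mono)
    finally show ?thesis using 1 assms by (simp add: mult_left_mono mult.commute)
  next
    case 2
    then show ?thesis using assms by simp
  next
    case 3
    have "(k * l - b) * (a + t * b + (1 + t) * l) = (k * l - b) * (a - b) + (1 + t) * ((k * l - b) * (b + l))"
      by (simp add: algebra_simps)
    also have "\<dots> \<le> k * l * (a - b) + (1 + t) * ((a - b) * ((k + 1) * l))"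
      using 3 assms by (intro add_mono mult_left_mono mult_mono mult_right_mono) (auto simp: algebra_simps)
    also have "\<dots> \<le> (2 + t) * (k + 1) * l * (a - b)"
      using 3 assms by (simp add: algebra_simps mult_right_mono)
    finally show ?thesis using 3 by simp
  qed
qed

lemma min_diff_sq_mult_le:
  fixes a b l k :: real
  assumes b: "0 \<le> b" "b \<le> a" and l: "0 \<le> l" and k: "0 \<le> k"
  shows "(min a (k * l) - min b (k * l))\<^sup>2 * (2 * (a + l) * (b + l) * (a + b + 2 * l))
      \<le> 12 * (k + 1) ^ 3 * l ^ 3 * (a - b)\<^sup>2"
proof (cases "k * l \<le> b")
  case False
  define d where "d = min a (k * l) - min b (k * l)"
  have d: "0 \<le> d" using b unfolding d_def by auto
  have "b + l \<le> (k + 1) * l" using False by (simp add: algebra_simps)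
  moreover have "d * (a + l) \<le> 2 * (k + 1) * l * (a - b)"
    using min_diff_mult_le[OF b l k, of 0] unfolding d_def by simp
  ultimately have "(b + l) * (d * (a + l)) \<le> ((k + 1) * l) * (2 * (k + 1) * l * (a - b))"
    by (rule mult_mono) (use b l k d in auto)
  moreover have "d * (a + b + 2 * l) \<le> 3 * (k + 1) * l * (a - b)"
    using min_diff_mult_le[OF b l k, of 1] unfolding d_def by (simp add: algebra_simps)
  ultimately have "(b + l) * (d * (a + l)) * (d * (a + b + 2 * l))
      \<le> ((k + 1) * l) * (2 * (k + 1) * l * (a - b)) * (3 * (k + 1) * l * (a - b))"
    by (rule mult_mono) (use b l k d in auto)
  then show ?thesis unfolding d_def[symmetric]
    by (simp add: power2_eq_square power3_eq_cube algebra_simps)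
qed (use b l k in simp)

lemma min_diff_sq_le_midpoint_gain:
  fixes a b l k :: real
  assumes a: "0 \<le> a" and b: "0 \<le> b" and l: "0 \<le> l" and k: "0 \<le> k"
  shows "(min a (k * l) - min b (k * l))\<^sup>2 \<le> 12 * (k + 1) ^ 3 * l * midpoint_gain a b l"
proof (cases "l = 0")
  case False
  then have l: "0 < l" using l by simp
  define D where "D = 2 * (a + l) * (b + l) * (a + b + 2 * l)"
  have D: "0 < D" unfolding D_def using a b l by simp
  have "(min a (k * l) - min b (k * l))\<^sup>2 * D \<le> 12 * (k + 1) ^ 3 * l ^ 3 * (a - b)\<^sup>2"
  proof (cases "b \<le> a")
    case True
    then show ?thesis unfolding D_def using min_diff_sq_mult_le[OF b True _ k] l by simp
  next
    case False
    then have "(min b (k * l) - min a (k * l))\<^sup>2 * (2 * (b + l) * (a + l) * (b + a + 2 * l))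
        \<le> 12 * (k + 1) ^ 3 * l ^ 3 * (b - a)\<^sup>2"
      using min_diff_sq_mult_le[of a b l k] a l k by simp
    moreover have "2 * (b + l) * (a + l) * (b + a + 2 * l) = D"
      unfolding D_def by (simp add: algebra_simps)
    ultimately show ?thesis by (simp only: power2_commute[of b a] power2_commute[of "min b _"])
  qed
  also have "\<dots> = 12 * (k + 1) ^ 3 * l * midpoint_gain a b l * D"
    using midpoint_gain_identity[OF a b l] unfolding D_def by algebra
  finally show ?thesis using D by simp
qed (use a b in simp)

lemma abs_le_of_sq_le_mult:
  fixes x c l t :: real
  assumes "x\<^sup>2 \<le> c * l" "0 < t" "0 \<le> l" "0 \<le> c"
  shows "2 * \<bar>x\<bar> \<le> t * l + c / t"
proof -
  have "(t * l + c / t)\<^sup>2 - 4 * (c * l) = (t * l - c / t)\<^sup>2"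
    using assms(2) by (simp add: field_simps power2_eq_square)
  then have "4 * (c * l) \<le> (t * l + c / t)\<^sup>2"
    using zero_le_power2[of "t * l - c / t"] by linarith
  then have "(2 * \<bar>x\<bar>)\<^sup>2 \<le> (t * l + c / t)\<^sup>2"
    using assms(1) by (simp add: power_mult_distrib)
  moreover have "0 \<le> t * l + c / t" using assms by simp
  ultimately show ?thesis by (rule power2_le_imp_le)
qed

lemma sum_abs_min_diff_le_midpoint_gain:
  fixes a b l :: "'b \<Rightarrow> real"
  assumes "\<And>E. E \<in> R \<Longrightarrow> 0 \<le> a E" "\<And>E. E \<in> R \<Longrightarrow> 0 \<le> b E" "\<And>E. E \<in> R \<Longrightarrow> 0 \<le> l E"
    and t: "0 < t" and k: "0 \<le> k"
  shows "2 * (\<Sum>E\<in>R. \<bar>min (a E) (k * l E) - min (b E) (k * l E)\<bar>)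
    \<le> t * (\<Sum>E\<in>R. l E) + 12 * (k + 1) ^ 3 * (\<Sum>E\<in>R. midpoint_gain (a E) (b E) (l E)) / t"
proof -
  let ?c = "12 * (k + 1) ^ 3"
  have "2 * \<bar>min (a E) (k * l E) - min (b E) (k * l E)\<bar>
      \<le> t * l E + ?c * midpoint_gain (a E) (b E) (l E) / t" if E: "E \<in> R" for E
  proof (rule abs_le_of_sq_le_mult)
    show "(min (a E) (k * l E) - min (b E) (k * l E))\<^sup>2 \<le> ?c * midpoint_gain (a E) (b E) (l E) * l E"
      using min_diff_sq_le_midpoint_gain[OF assms(1-3)[OF E] k] by (simp add: ac_simps)
    show "0 \<le> ?c * midpoint_gain (a E) (b E) (l E)"
      using midpoint_gain_nonneg[OF assms(1-3)[OF E]] k by simp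
  qed (use t assms(3)[OF that] in auto)
  then have "(\<Sum>E\<in>R. 2 * \<bar>min (a E) (k * l E) - min (b E) (k * l E)\<bar>)
      \<le> (\<Sum>E\<in>R. t * l E + ?c * midpoint_gain (a E) (b E) (l E) / t)"
    by (rule sum_mono)
  then show ?thesis
    by (simp add: sum.distrib sum_distrib_left sum_divide_distrib)
qed

section \<open>Convex combinations of tails\<close>

lemma tail_co_self: "\<mu> n \<in> tail_co \<mu> n"
  unfolding tail_co_def by (intro CollectI exI[of _ "{n}"] exI[of _ "\<lambda>_. 1"]) simp

lemma tail_co_mono:
  assumes "n \<le> p"
  shows "tail_co \<mu> p \<subseteq> tail_co \<mu> n"
proof
  fix m assume "m \<in> tail_co \<mu> p"
  then obtain F c where "m = (\<lambda>B. \<Sum>i\<in>F. c i * \<mu> i B)" "finite F" "F \<noteq> {}" "F \<subseteq> {p..}"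
    "\<forall>i\<in>F. 0 \<le> c i" "sum c F = 1" unfolding tail_co_def by blast
  moreover have "F \<subseteq> {n..}" using \<open>F \<subseteq> {p..}\<close> assms by auto
  ultimately show "m \<in> tail_co \<mu> n" unfolding tail_co_def by blast
qed

lemma sum_extend_by_zero:
  fixes c x :: "'a \<Rightarrow> 'b::semiring_0"
  shows "finite G \<Longrightarrow> F \<subseteq> G \<Longrightarrow> (\<Sum>i\<in>G. (if i \<in> F then c i else 0) * x i) = (\<Sum>i\<in>F. c i * x i)"
  by (rule sum.mono_neutral_cong_right) auto

lemma tail_co_midpoint:
  assumes "m \<in> tail_co \<mu> n" "m' \<in> tail_co \<mu> n"
  shows "(\<lambda>B. (m B + m' B) / 2) \<in> tail_co \<mu> n"
proof -
  obtain F c where m: "m = (\<lambda>B. \<Sum>i\<in>F. c i * \<mu> i B)" and F: "finite F" "F \<noteq> {}" "F \<subseteq> {n..}"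
    "\<forall>i\<in>F. 0 \<le> c i" "sum c F = 1" using assms(1) unfolding tail_co_def by blast
  obtain G d where m': "m' = (\<lambda>B. \<Sum>i\<in>G. d i * \<mu> i B)" and G: "finite G" "G \<noteq> {}" "G \<subseteq> {n..}"
    "\<forall>i\<in>G. 0 \<le> d i" "sum d G = 1" using assms(2) unfolding tail_co_def by blast
  define c' where "c' i = (if i \<in> F then c i else 0)" for i
  define d' where "d' i = (if i \<in> G then d i else 0)" for i
  define e where "e i = (c' i + d' i) / 2" for i
  have extend: "(\<Sum>i\<in>F \<union> G. e i * x i) = ((\<Sum>i\<in>F. c i * x i) + (\<Sum>i\<in>G. d i * x i)) / 2"
    for x :: "nat \<Rightarrow> real"
  proof -
    have "(\<Sum>i\<in>F \<union> G. e i * x i) = ((\<Sum>i\<in>F \<union> G. c' i * x i) + (\<Sum>i\<in>F \<union> G. d' i * x i)) / 2"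
      unfolding e_def by (simp add: sum.distrib[symmetric] sum_divide_distrib algebra_simps)
    then show ?thesis
      unfolding c'_def d'_def using F(1) G(1) by (simp add: sum_extend_by_zero)
  qed
  have "(\<lambda>B. (m B + m' B) / 2) = (\<lambda>B. \<Sum>i\<in>F \<union> G. e i * \<mu> i B)"
    unfolding m m' extend ..
  moreover have "sum e (F \<union> G) = 1" using extend[of "\<lambda>_. 1"] F(5) G(5) by simp
  moreover have "\<forall>i\<in>F \<union> G. 0 \<le> e i" using F(4) G(4) by (auto simp: e_def c'_def d'_def)
  ultimately show ?thesis unfolding tail_co_def using F(1-3) G(1-3)
    by (intro CollectI exI[of _ "F \<union> G"] exI[of _ e]) auto
qed

lemma nonneg_fa_tail_co:
  assumes "\<And>i. nonneg_fa A (\<mu> i)" "m \<in> tail_co \<mu> n"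
  shows "nonneg_fa A m"
proof -
  obtain F c where m: "m = (\<lambda>B. \<Sum>i\<in>F. c i * \<mu> i B)" and c: "\<forall>i\<in>F. 0 \<le> c i"
    using assms(2) unfolding tail_co_def by blast
  show ?thesis unfolding m nonneg_fa_def fin_additive_def
    using c nonneg_faD[OF assms(1)] fin_additiveD[OF nonneg_faD(1)[OF assms(1)]]
    by (auto intro!: sum_nonneg simp: distrib_left sum.distrib)
qed

section \<open>The construction\<close>

lemma two_div_real_Suc_tendsto: "(\<lambda>N. 2 / (real N + 1)) \<longlonglongrightarrow> 0"
  using LIMSEQ_Suc[OF lim_const_over_n[of 2]] by (simp add: add.commute)

locale bounded_nonneg_fa_seq =
  fixes \<Omega> :: "'a set" and A :: "'a set set" and \<mu> :: "nat \<Rightarrow> 'a set \<Rightarrow> real" and K :: real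
  assumes alg: "algebra \<Omega> A"
    and nonneg: "\<And>n. nonneg_fa A (\<mu> n)"
    and bounded: "\<And>n. \<mu> n \<Omega> \<le> K"
begin

definition lam :: "'a set \<Rightarrow> real" where
  "lam B = (\<Sum>n. \<mu> n B / 2 ^ n)"

lemma space_in: "\<Omega> \<in> A"
  using alg algebra.top by blast

lemma mu_le_bound:
  assumes "B \<in> A"
  shows "\<mu> n B \<le> K"
proof -
  interpret algebra \<Omega> A by (rule alg)
  have "B \<subseteq> \<Omega>" using assms sets_into_space by blast
  then have "\<mu> n B \<le> \<mu> n \<Omega>" using nonneg_fa_mono[OF alg nonneg assms space_in] by blast
  then show ?thesis using bounded[of n] by linarith
qed

lemma lam_summable:
  assumes B: "B \<in> A"
  shows "summable (\<lambda>n. \<mu> n B / 2 ^ n)"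
proof (rule summable_comparison_test')
  show "summable (\<lambda>n. K * (1 / 2) ^ n)" by (intro summable_mult summable_geometric) simp
  fix n
  have "\<mu> n B / 2 ^ n = \<mu> n B * (1 / 2) ^ n" by (simp add: power_divide)
  also have "\<dots> \<le> K * (1 / 2) ^ n" using mu_le_bound[OF B] by (intro mult_right_mono) auto
  finally show "norm (\<mu> n B / 2 ^ n) \<le> K * (1 / 2) ^ n"
    using nonneg_faD(2)[OF nonneg B, of n] by simp
qed

lemma nonneg_fa_lam: "nonneg_fa A lam"
  unfolding nonneg_fa_def fin_additive_def
proof (intro conjI ballI impI)
  fix B assume "B \<in> A"
  then show "0 \<le> lam B"
    unfolding lam_def using lam_summable nonneg_faD(2)[OF nonneg] by (intro suminf_nonneg) auto
next
  fix B C assume B: "B \<in> A" and C: "C \<in> A" and BC: "B \<inter> C = {}"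
  have "lam (B \<union> C) = (\<Sum>n. \<mu> n B / 2 ^ n + \<mu> n C / 2 ^ n)"
    unfolding lam_def using fin_additiveD[OF nonneg_faD(1)[OF nonneg] B C BC]
    by (simp add: add_divide_distrib)
  also have "\<dots> = lam B + lam C"
    unfolding lam_def by (rule suminf_add[symmetric]) (use lam_summable B C in auto)
  finally show "lam (B \<union> C) = lam B + lam C" .
qed

lemma nonneg_fa_scaled_lam: "nonneg_fa A (\<lambda>B. real k * lam B)"
  by (rule nonneg_fa_scale[OF nonneg_fa_lam]) simp

lemma nonneg_fa_tail: "m \<in> tail_co \<mu> n \<Longrightarrow> nonneg_fa A m"
  by (rule nonneg_fa_tail_co[OF nonneg])

lemma tail_co_le_bound:
  assumes "m \<in> tail_co \<mu> n" "B \<in> A"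
  shows "m B \<le> K"
proof -
  obtain F c where m: "m = (\<lambda>B. \<Sum>i\<in>F. c i * \<mu> i B)" and c: "\<forall>i\<in>F. 0 \<le> c i" "sum c F = 1"
    using assms(1) unfolding tail_co_def by blast
  have "m B \<le> (\<Sum>i\<in>F. c i * K)"
    unfolding m using c mu_le_bound[OF assms(2)] by (intro sum_mono mult_left_mono) auto
  also have "\<dots> = K" using c(2) by (simp add: sum_distrib_right[symmetric])
  finally show ?thesis .
qed

text \<open>The functional \<open>par_value\<close> is concave on \<open>ba(A)\<^sub>+\<close>; its approximate maximisers
  over the tails \<open>\<Gamma>(n)\<close> are the sequence \<open>m\<^sub>n\<close> of the theorem.\<close>

definition par_value :: "('a set \<Rightarrow> real) \<Rightarrow> real" where
  "par_value m = Inf {(\<Sum>C\<in>P. par_sum (m C) (lam C)) | P. alg_partition \<Omega> A P}"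

lemma par_value_set_nonempty_bdd_below:
  assumes "nonneg_fa A m"
  shows "{(\<Sum>C\<in>P. par_sum (m C) (lam C)) | P. alg_partition \<Omega> A P} \<noteq> {}"
    and "x \<in> {(\<Sum>C\<in>P. par_sum (m C) (lam C)) | P. alg_partition \<Omega> A P} \<Longrightarrow> 0 \<le> x"
    and "bdd_below {(\<Sum>C\<in>P. par_sum (m C) (lam C)) | P. alg_partition \<Omega> A P}"
proof -
  show "{(\<Sum>C\<in>P. par_sum (m C) (lam C)) | P. alg_partition \<Omega> A P} \<noteq> {}"
    using alg_partition_space[OF alg] by blast
  show nn: "0 \<le> x" if x: "x \<in> {(\<Sum>C\<in>P. par_sum (m C) (lam C)) | P. alg_partition \<Omega> A P}" for x
  proof -
    obtain P where P: "alg_partition \<Omega> A P" "x = (\<Sum>C\<in>P. par_sum (m C) (lam C))"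
      using x by blast
    show ?thesis
      unfolding P(2) using alg_partitionD(2)[OF P(1)] nonneg_faD(2)[OF assms]
        nonneg_faD(2)[OF nonneg_fa_lam]
      by (intro sum_nonneg par_sum_nonneg) auto
  qed
  then show "bdd_below {(\<Sum>C\<in>P. par_sum (m C) (lam C)) | P. alg_partition \<Omega> A P}"
    by (rule bdd_belowI)
qed

lemma par_value_le_sum:
  "nonneg_fa A m \<Longrightarrow> alg_partition \<Omega> A P \<Longrightarrow> par_value m \<le> (\<Sum>C\<in>P. par_sum (m C) (lam C))"
  unfolding par_value_def by (rule cInf_lower) (auto dest: par_value_set_nonempty_bdd_below(3))

lemma par_value_approx:
  assumes "nonneg_fa A m" "0 < e"
  obtains P where "alg_partition \<Omega> A P" "(\<Sum>C\<in>P. par_sum (m C) (lam C)) < par_value m + e"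
proof -
  have "Inf {(\<Sum>C\<in>P. par_sum (m C) (lam C)) | P. alg_partition \<Omega> A P} < par_value m + e"
    using assms(2) unfolding par_value_def by simp
  from cInf_lessD[OF par_value_set_nonempty_bdd_below(1)[OF assms(1)] this] that show ?thesis
    by blast
qed

lemma par_value_nonneg:
  assumes "nonneg_fa A m"
  shows "0 \<le> par_value m"
  unfolding par_value_def
  by (rule cInf_greatest[OF par_value_set_nonempty_bdd_below(1)[OF assms]])
    (rule par_value_set_nonempty_bdd_below(2)[OF assms])

lemma par_value_le_lam:
  assumes "nonneg_fa A m"
  shows "par_value m \<le> lam \<Omega>"
proof -
  have "par_value m \<le> par_sum (m \<Omega>) (lam \<Omega>)"
    using par_value_le_sum[OF assms alg_partition_space[OF alg]] by simp
  also have "\<dots> \<le> lam \<Omega>"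
    using nonneg_faD(2)[OF assms space_in] nonneg_faD(2)[OF nonneg_fa_lam space_in]
    by (rule par_sum_le_right)
  finally show ?thesis .
qed

definition tail_sup :: "nat \<Rightarrow> real" where
  "tail_sup N = Sup (par_value ` tail_co \<mu> N)"

lemma bdd_above_par_value_tail: "bdd_above (par_value ` tail_co \<mu> N)"
  by (rule bdd_aboveI[of _ "lam \<Omega>"]) (auto intro: par_value_le_lam nonneg_fa_tail)

lemma par_value_le_tail_sup: "m \<in> tail_co \<mu> N \<Longrightarrow> par_value m \<le> tail_sup N"
  unfolding tail_sup_def by (rule cSup_upper[OF _ bdd_above_par_value_tail]) simp

lemma decseq_tail_sup: "decseq tail_sup"
proof (rule decseq_SucI)
  fix n
  show "tail_sup (Suc n) \<le> tail_sup n"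
    unfolding tail_sup_def using tail_co_self[of \<mu> "Suc n"]
    by (intro cSup_subset_mono bdd_above_par_value_tail image_mono tail_co_mono) auto
qed

definition tail_lim :: real where
  "tail_lim = lim tail_sup"

lemma tail_sup_tendsto: "tail_sup \<longlonglongrightarrow> tail_lim"
  and tail_lim_le: "tail_lim \<le> tail_sup N"
proof -
  have "0 \<le> tail_sup N" for N
    using par_value_nonneg[OF nonneg_fa_tail[OF tail_co_self]] par_value_le_tail_sup[OF tail_co_self]
    by (rule order_trans)
  then obtain L where L: "tail_sup \<longlonglongrightarrow> L" "\<And>N. L \<le> tail_sup N"
    using decseq_convergent[OF decseq_tail_sup, of 0] by blast
  then have "tail_lim = L" unfolding tail_lim_def by (simp add: limI)
  then show "tail_sup \<longlonglongrightarrow> tail_lim" "tail_lim \<le> tail_sup N" using L by auto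
qed

definition near_max :: "nat \<Rightarrow> 'a set \<Rightarrow> real" where
  "near_max N = (SOME m. m \<in> tail_co \<mu> N \<and> tail_sup N - 1 / (real N + 1) < par_value m)"

lemma near_max_in_tail: "near_max N \<in> tail_co \<mu> N"
  and tail_sup_less_par_value_near_max: "tail_sup N - 1 / (real N + 1) < par_value (near_max N)"
proof -
  have ne: "par_value ` tail_co \<mu> N \<noteq> {}" using tail_co_self by blast
  have "tail_sup N - 1 / (real N + 1) < Sup (par_value ` tail_co \<mu> N)"
    unfolding tail_sup_def[symmetric] by simp
  from less_cSupD[OF ne this] obtain x
    where "x \<in> par_value ` tail_co \<mu> N" "tail_sup N - 1 / (real N + 1) < x"
    by blast
  then have "\<exists>m. m \<in> tail_co \<mu> N \<and> tail_sup N - 1 / (real N + 1) < par_value m" by blast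
  from someI_ex[OF this] show "near_max N \<in> tail_co \<mu> N"
    and "tail_sup N - 1 / (real N + 1) < par_value (near_max N)"
    unfolding near_max_def by auto
qed

lemma nonneg_fa_near_max: "nonneg_fa A (near_max N)"
  by (rule nonneg_fa_tail[OF near_max_in_tail])

lemma tail_lim_less_par_value_near_max: "tail_lim - 1 / (real n + 1) < par_value (near_max n)"
  using tail_sup_less_par_value_near_max[of n] tail_lim_le[of n] by linarith

definition gain_bound :: "nat \<Rightarrow> real" where
  "gain_bound N = tail_sup N - tail_lim + 2 / (real N + 1)"

lemma gain_bound_pos: "0 < gain_bound N"
  unfolding gain_bound_def using tail_lim_le[of N] by (simp add: add_nonneg_pos)

lemma midpoint_near_max_in_tail:
  "N \<le> n \<Longrightarrow> N \<le> p \<Longrightarrow> (\<lambda>B. (near_max n B + near_max p B) / 2) \<in> tail_co \<mu> N"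
  using near_max_in_tail tail_co_mono by (intro tail_co_midpoint) blast+

lemma sum_midpoint_gain_le_gain_bound:
  assumes "N \<le> n" "N \<le> p"
    and R: "alg_partition \<Omega> A R" and P: "alg_partition \<Omega> A P" "refines R P"
    and P_approx: "(\<Sum>C\<in>P. par_sum ((near_max n C + near_max p C) / 2) (lam C))
      < par_value (\<lambda>B. (near_max n B + near_max p B) / 2) + 1 / (real N + 1)"
  shows "(\<Sum>E\<in>R. midpoint_gain (near_max n E) (near_max p E) (lam E)) \<le> gain_bound N"
proof -
  define mid where "mid B = (near_max n B + near_max p B) / 2" for B
  have mid_tail: "mid \<in> tail_co \<mu> N"
    unfolding mid_def by (rule midpoint_near_max_in_tail[OF assms(1,2)])
  have "(\<Sum>E\<in>R. par_sum (mid E) (lam E)) \<le> (\<Sum>E\<in>P. par_sum (mid E) (lam E))"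
    using nonneg_fa_empty[OF alg nonneg_fa_tail[OF mid_tail]] nonneg_fa_empty[OF alg nonneg_fa_lam]
    by (intro superadditive_refines_sum_le[OF alg _ _ P(1) R P(2)]
        superadditive_par_sum nonneg_fa_tail[OF mid_tail] nonneg_fa_lam)
      (simp add: par_sum_def)
  also have "\<dots> < tail_sup N + 1 / (real N + 1)"
    using P_approx par_value_le_tail_sup[OF mid_tail] unfolding mid_def by simp
  finally have mid_le: "(\<Sum>E\<in>R. par_sum (mid E) (lam E)) < tail_sup N + 1 / (real N + 1)" .
  have near_max_ge: "tail_lim - 1 / (real N + 1) < (\<Sum>E\<in>R. par_sum (near_max q E) (lam E))"
    if "N \<le> q" for q
  proof -
    have "1 / (real q + 1) \<le> 1 / (real N + 1)" using that by (simp add: frac_le)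
    then show ?thesis
      using tail_lim_less_par_value_near_max[of q] par_value_le_sum[OF nonneg_fa_near_max[of q] R]
      by linarith
  qed
  have "(\<Sum>E\<in>R. midpoint_gain (near_max n E) (near_max p E) (lam E))
      = (\<Sum>E\<in>R. par_sum (mid E) (lam E)) - (\<Sum>E\<in>R. par_sum (near_max n E) (lam E)) / 2
        - (\<Sum>E\<in>R. par_sum (near_max p E) (lam E)) / 2"
    unfolding midpoint_gain_def mid_def
    by (simp add: sum_subtractf sum.distrib sum_divide_distrib[symmetric] add_divide_distrib)
  also have "\<dots> \<le> gain_bound N"
    using mid_le near_max_ge[OF assms(1)] near_max_ge[OF assms(2)] unfolding gain_bound_def by linarith
  finally show ?thesis .
qed

text \<open>In the notation of the theorem \<open>trunc k n = m\<^sub>n \<and> k\<lambda>\<close>; these converge in norm to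
  \<open>trunc_lim k\<close>, which increases in \<open>k\<close> to \<open>\<xi> = xi\<close>.\<close>

definition trunc :: "nat \<Rightarrow> nat \<Rightarrow> 'a set \<Rightarrow> real" where
  "trunc k n = ba_inf A (near_max n) (\<lambda>C. real k * lam C)"

definition trunc_bound :: "nat \<Rightarrow> nat \<Rightarrow> real" where
  "trunc_bound k N = sqrt (gain_bound N) * (lam \<Omega> + 12 * (real k + 1) ^ 3) / 2 + 2 / (real N + 1)"

lemma nonneg_fa_trunc: "nonneg_fa A (trunc k n)"
  unfolding trunc_def by (rule nonneg_fa_ba_inf[OF alg nonneg_fa_near_max nonneg_fa_scaled_lam])

lemma trunc_diff_refinementE:
  assumes "N \<le> n" "N \<le> p" and Q: "alg_partition \<Omega> A Q"
  obtains R where "alg_partition \<Omega> A R"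
    and "(\<Sum>E\<in>Q. \<bar>trunc k n E - trunc k p E\<bar>)
      \<le> (\<Sum>E\<in>R. \<bar>min (near_max n E) (real k * lam E) - min (near_max p E) (real k * lam E)\<bar>)
        + 2 / (real N + 1)"
    and "(\<Sum>E\<in>R. midpoint_gain (near_max n E) (near_max p E) (lam E)) \<le> gain_bound N"
proof -
  define \<epsilon> where "\<epsilon> = 1 / (real N + 1)"
  define \<nu> where "\<nu> C = real k * lam C" for C
  define mid where "mid B = (near_max n B + near_max p B) / 2" for B
  have \<epsilon>: "0 < \<epsilon>" unfolding \<epsilon>_def by simp
  have \<nu>: "nonneg_fa A \<nu>" unfolding \<nu>_def by (rule nonneg_fa_scaled_lam)
  have mid: "nonneg_fa A mid"
    unfolding mid_def by (rule nonneg_fa_tail[OF midpoint_near_max_in_tail[OF assms(1,2)]])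
  obtain P1 where P1: "alg_partition \<Omega> A P1"
    "(\<Sum>C\<in>P1. min (near_max n C) (\<nu> C)) < ba_inf A (near_max n) \<nu> \<Omega> + \<epsilon>"
    using ba_inf_approx_partition[OF alg nonneg_fa_near_max \<nu> \<epsilon>] by blast
  obtain P2 where P2: "alg_partition \<Omega> A P2"
    "(\<Sum>C\<in>P2. min (near_max p C) (\<nu> C)) < ba_inf A (near_max p) \<nu> \<Omega> + \<epsilon>"
    using ba_inf_approx_partition[OF alg nonneg_fa_near_max \<nu> \<epsilon>] by blast
  obtain P3 where P3: "alg_partition \<Omega> A P3"
    "(\<Sum>C\<in>P3. par_sum (mid C) (lam C)) < par_value mid + \<epsilon>"
    using par_value_approx[OF mid \<epsilon>] by blast
  obtain R23 where R23: "alg_partition \<Omega> A R23" "refines R23 P2" "refines R23 P3"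
    using alg_partition_common_refinementE[OF alg P2(1) P3(1)] .
  obtain R123 where R123: "alg_partition \<Omega> A R123" "refines R123 P1" "refines R123 R23"
    using alg_partition_common_refinementE[OF alg P1(1) R23(1)] .
  obtain R where R: "alg_partition \<Omega> A R" "refines R Q" "refines R R123"
    using alg_partition_common_refinementE[OF alg Q R123(1)] .
  have R_refines: "refines R P1" "refines R P2" "refines R P3"
    using refines_trans[OF R(3) R123(2)] refines_trans[OF refines_trans[OF R(3) R123(3)] R23(2)]
      refines_trans[OF refines_trans[OF R(3) R123(3)] R23(3)] by auto
  show thesis
  proof (rule that[OF R(1)])
    show "(\<Sum>E\<in>Q. \<bar>trunc k n E - trunc k p E\<bar>)
      \<le> (\<Sum>E\<in>R. \<bar>min (near_max n E) (real k * lam E) - min (near_max p E) (real k * lam E)\<bar>)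
        + 2 / (real N + 1)"
      using sum_abs_ba_inf_diff_le[OF alg nonneg_fa_near_max nonneg_fa_near_max \<nu> Q R(1,2)
          P1(1) R_refines(1) P1(2) P2(1) R_refines(2) P2(2)]
      unfolding trunc_def \<nu>_def \<epsilon>_def by simp
    show "(\<Sum>E\<in>R. midpoint_gain (near_max n E) (near_max p E) (lam E)) \<le> gain_bound N"
      using sum_midpoint_gain_le_gain_bound[OF assms(1,2) R(1) P3(1) R_refines(3)] P3(2)
      unfolding mid_def \<epsilon>_def by simp
  qed
qed

text \<open>AM-GM with weight \<open>\<surd>(gain_bound N)\<close> turns the small total midpoint gain into
  closeness of the cellwise minima.\<close>

lemma trunc_cauchy:
  assumes "N \<le> n" "N \<le> p" and Q: "alg_partition \<Omega> A Q"
  shows "(\<Sum>E\<in>Q. \<bar>trunc k n E - trunc k p E\<bar>) \<le> trunc_bound k N"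
proof -
  obtain R where R: "alg_partition \<Omega> A R"
    and cells: "(\<Sum>E\<in>Q. \<bar>trunc k n E - trunc k p E\<bar>)
      \<le> (\<Sum>E\<in>R. \<bar>min (near_max n E) (real k * lam E) - min (near_max p E) (real k * lam E)\<bar>)
        + 2 / (real N + 1)"
    and gain: "(\<Sum>E\<in>R. midpoint_gain (near_max n E) (near_max p E) (lam E)) \<le> gain_bound N"
    by (rule trunc_diff_refinementE[OF assms])
  define t where "t = sqrt (gain_bound N)"
  define C where "C = 12 * (real k + 1) ^ 3"
  define G where "G = (\<Sum>E\<in>R. midpoint_gain (near_max n E) (near_max p E) (lam E))"
  have t: "0 < t" unfolding t_def using gain_bound_pos by simp
  have "2 * (\<Sum>E\<in>R. \<bar>min (near_max n E) (real k * lam E) - min (near_max p E) (real k * lam E)\<bar>)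
      \<le> t * (\<Sum>E\<in>R. lam E) + C * G / t"
    unfolding C_def G_def using alg_partitionD(2)[OF R] t nonneg_faD(2)[OF nonneg_fa_near_max]
      nonneg_faD(2)[OF nonneg_fa_lam]
    by (intro sum_abs_min_diff_le_midpoint_gain) auto
  also have "(\<Sum>E\<in>R. lam E) = lam \<Omega>"
    by (rule fin_additive_partition_sum[OF alg nonneg_faD(1)[OF nonneg_fa_lam] R])
  also have "C * G / t \<le> C * gain_bound N / t"
    using gain t unfolding C_def G_def by (intro divide_right_mono mult_left_mono) auto
  also have "\<dots> = C * (gain_bound N / t)" by simp
  also have "gain_bound N / t = t" unfolding t_def using gain_bound_pos[of N] by (simp add: real_div_sqrt)
  finally have "(\<Sum>E\<in>Q. \<bar>trunc k n E - trunc k p E\<bar>) \<le> (t * lam \<Omega> + C * t) / 2 + 2 / (real N + 1)"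
    by (intro order_trans[OF cells]) simp
  then show ?thesis unfolding trunc_bound_def t_def C_def by (simp add: algebra_simps)
qed

lemma gain_bound_tendsto: "gain_bound \<longlonglongrightarrow> 0"
proof -
  have "(\<lambda>N. tail_sup N - tail_lim + 2 / (real N + 1)) \<longlonglongrightarrow> tail_lim - tail_lim + 0"
    by (intro tendsto_intros tail_sup_tendsto two_div_real_Suc_tendsto)
  then show ?thesis unfolding gain_bound_def[abs_def] by simp
qed

lemma trunc_bound_tendsto: "trunc_bound k \<longlonglongrightarrow> 0"
proof -
  have "trunc_bound k \<longlonglongrightarrow> sqrt 0 * (lam \<Omega> + 12 * (real k + 1) ^ 3) / 2 + 0"
    unfolding trunc_bound_def[abs_def]
    by (intro tendsto_intros gain_bound_tendsto two_div_real_Suc_tendsto) simp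
  then show ?thesis by simp
qed

lemma trunc_bound_eventually_less: "0 < e \<Longrightarrow> \<exists>N. \<forall>M\<ge>N. trunc_bound k M < e"
  using order_tendstoD(2)[OF trunc_bound_tendsto] unfolding eventually_sequentially .

lemma abs_trunc_diff_le:
  "N \<le> n \<Longrightarrow> N \<le> p \<Longrightarrow> B \<in> A \<Longrightarrow> \<bar>trunc k n B - trunc k p B\<bar> \<le> trunc_bound k N"
  by (rule abs_le_of_alg_partition_sum_le[OF alg _ trunc_cauchy])

definition trunc_lim :: "nat \<Rightarrow> 'a set \<Rightarrow> real" where
  "trunc_lim k B = lim (\<lambda>n. trunc k n B)"

lemma trunc_tendsto:
  assumes B: "B \<in> A"
  shows "(\<lambda>n. trunc k n B) \<longlonglongrightarrow> trunc_lim k B"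
proof -
  have "Cauchy (\<lambda>n. trunc k n B)"
  proof (rule metric_CauchyI)
    fix e :: real assume "0 < e"
    then obtain N where N: "\<forall>M\<ge>N. trunc_bound k M < e" using trunc_bound_eventually_less by blast
    have "dist (trunc k m B) (trunc k n B) < e" if "N \<le> m" "N \<le> n" for m n
      using abs_trunc_diff_le[OF that B, of k] N unfolding dist_real_def by force
    then show "\<exists>M. \<forall>m\<ge>M. \<forall>n\<ge>M. dist (trunc k m B) (trunc k n B) < e" by blast
  qed
  then show ?thesis unfolding trunc_lim_def by (simp add: Cauchy_convergent_iff convergent_LIMSEQ_iff)
qed

lemma sum_abs_trunc_diff_lim_le:
  assumes "N \<le> n" "alg_partition \<Omega> A Q"
  shows "(\<Sum>E\<in>Q. \<bar>trunc k n E - trunc_lim k E\<bar>) \<le> trunc_bound k N"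
proof (rule LIMSEQ_le_const2)
  show "(\<lambda>p. \<Sum>E\<in>Q. \<bar>trunc k n E - trunc k p E\<bar>) \<longlonglongrightarrow> (\<Sum>E\<in>Q. \<bar>trunc k n E - trunc_lim k E\<bar>)"
    using alg_partitionD(2)[OF assms(2)]
    by (intro tendsto_sum tendsto_rabs tendsto_diff tendsto_const trunc_tendsto) auto
  show "\<exists>M. \<forall>p\<ge>M. (\<Sum>E\<in>Q. \<bar>trunc k n E - trunc k p E\<bar>) \<le> trunc_bound k N"
    using trunc_cauchy[OF assms(1) _ assms(2)] by blast
qed

lemma nonneg_fa_trunc_lim: "nonneg_fa A (trunc_lim k)"
  by (rule nonneg_fa_tendsto[OF alg nonneg_fa_trunc trunc_tendsto])

lemma trunc_le: "B \<in> A \<Longrightarrow> trunc k n B \<le> near_max n B"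
  and trunc_le_lam: "B \<in> A \<Longrightarrow> trunc k n B \<le> real k * lam B"
  using ba_inf_bounds[OF alg nonneg_fa_near_max nonneg_fa_scaled_lam] unfolding trunc_def by auto

lemma trunc_mono: "k \<le> k' \<Longrightarrow> B \<in> A \<Longrightarrow> trunc k n B \<le> trunc k' n B"
  unfolding trunc_def using nonneg_faD(2)[OF nonneg_fa_lam]
  by (intro ba_inf_mono_right[OF alg nonneg_fa_near_max nonneg_fa_scaled_lam nonneg_fa_scaled_lam])
    (auto intro: mult_right_mono)

lemma trunc_lim_le_bound:
  assumes "B \<in> A"
  shows "trunc_lim k B \<le> K"
proof (rule LIMSEQ_le_const2[OF trunc_tendsto[OF assms]])
  show "\<exists>N. \<forall>n\<ge>N. trunc k n B \<le> K"
    using order_trans[OF trunc_le[OF assms] tail_co_le_bound[OF near_max_in_tail assms]] by blast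
qed

lemma trunc_lim_le_lam:
  assumes "B \<in> A"
  shows "trunc_lim k B \<le> real k * lam B"
  using trunc_le_lam[OF assms] by (intro LIMSEQ_le_const2[OF trunc_tendsto[OF assms]]) blast

lemma incseq_trunc_lim:
  assumes "B \<in> A"
  shows "incseq (\<lambda>k. trunc_lim k B)"
proof (rule incseq_SucI)
  fix k
  show "trunc_lim k B \<le> trunc_lim (Suc k) B"
    using trunc_mono[OF le_SucI[OF order_refl] assms]
    by (intro LIMSEQ_le[OF trunc_tendsto[OF assms] trunc_tendsto[OF assms]]) blast
qed

definition xi :: "'a set \<Rightarrow> real" where
  "xi B = (SUP k. trunc_lim k B)"

lemma trunc_lim_tendsto_xi: "B \<in> A \<Longrightarrow> (\<lambda>k. trunc_lim k B) \<longlonglongrightarrow> xi B"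
  unfolding xi_def using trunc_lim_le_bound
  by (intro LIMSEQ_incseq_SUP incseq_trunc_lim bdd_aboveI2) auto

lemma trunc_lim_le_xi: "B \<in> A \<Longrightarrow> trunc_lim k B \<le> xi B"
  by (rule incseq_le[OF incseq_trunc_lim trunc_lim_tendsto_xi])

lemma nonneg_fa_xi: "nonneg_fa A xi"
  by (rule nonneg_fa_tendsto[OF alg nonneg_fa_trunc_lim trunc_lim_tendsto_xi])

lemma abs_trunc_diff_lim_le:
  "N \<le> n \<Longrightarrow> B \<in> A \<Longrightarrow> \<bar>trunc k n B - trunc_lim k B\<bar> \<le> trunc_bound k N"
  by (rule abs_le_of_alg_partition_sum_le[OF alg _ sum_abs_trunc_diff_lim_le])

lemma xi_diff_trunc_lim_le: "B \<in> A \<Longrightarrow> xi B - trunc_lim k B \<le> xi \<Omega> - trunc_lim k \<Omega>"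
  by (rule nonneg_fa_diff_le_space[OF alg nonneg_faD(1)[OF nonneg_fa_xi]
        nonneg_faD(1)[OF nonneg_fa_trunc_lim] trunc_lim_le_xi])

lemma xi_diff_trunc_lim_less:
  assumes "0 < e"
  shows "\<exists>j. xi \<Omega> - trunc_lim j \<Omega> < e"
proof -
  have "\<forall>\<^sub>F j in sequentially. xi \<Omega> - e < trunc_lim j \<Omega>"
    using assms by (intro order_tendstoD(1)[OF trunc_lim_tendsto_xi[OF space_in]]) simp
  then obtain N where "\<forall>j\<ge>N. xi \<Omega> - e < trunc_lim j \<Omega>" unfolding eventually_sequentially ..
  then have "xi \<Omega> - trunc_lim N \<Omega> < e" by auto
  then show ?thesis ..
qed

lemma trunc_lim_le_ba_inf_xi:
  assumes B: "B \<in> A"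
  shows "trunc_lim k B \<le> ba_inf A xi (\<lambda>C. real k * lam C) B"
proof (rule ba_inf_greatest[OF alg nonneg_fa_xi nonneg_fa_scaled_lam B])
  interpret algebra \<Omega> A by (rule alg)
  fix D assume D: "D \<in> A" "D \<subseteq> B"
  have "B - D \<in> A" using B D(1) by auto
  then have "trunc_lim k B = trunc_lim k D + trunc_lim k (B - D)"
    using fin_additiveD[OF nonneg_faD(1)[OF nonneg_fa_trunc_lim] D(1), of "B - D"] D(2)
    by (simp add: Un_absorb1)
  also have "\<dots> \<le> xi D + real k * lam (B - D)"
    using trunc_lim_le_xi[OF D(1)] trunc_lim_le_lam[OF \<open>B - D \<in> A\<close>] by (rule add_mono)
  finally show "trunc_lim k B \<le> xi D + real k * lam (B - D)" .
qed

text \<open>Cut \<open>B\<close> nearly optimally for \<open>m\<^sub>n \<and> k\<lambda>\<close>; on the part \<open>D\<close> where \<open>m\<^sub>n\<close> is used,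
  \<open>\<xi>\<close> is within \<open>\<epsilon>\<close> of some \<open>\<xi>\<^sub>j\<close>, which in turn is close to \<open>m\<^sub>n \<and> j\<lambda> \<le> m\<^sub>n\<close>.\<close>

lemma ba_inf_xi_le_trunc_lim:
  assumes B: "B \<in> A"
  shows "ba_inf A xi (\<lambda>C. real k * lam C) B \<le> trunc_lim k B"
proof (rule field_le_epsilon)
  fix e :: real assume "0 < e"
  then have e: "0 < e / 4" by simp
  obtain j where j: "xi \<Omega> - trunc_lim j \<Omega> < e / 4"
    using xi_diff_trunc_lim_less[OF e] by blast
  obtain N1 where N1: "\<forall>M\<ge>N1. trunc_bound k M < e / 4"
    using trunc_bound_eventually_less[OF e] by blast
  obtain N2 where N2: "\<forall>M\<ge>N2. trunc_bound j M < e / 4"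
    using trunc_bound_eventually_less[OF e] by blast
  define n where "n = max N1 N2"
  have n: "N1 \<le> n" "N2 \<le> n" unfolding n_def by simp_all
  obtain D where D: "D \<in> A" "D \<subseteq> B"
    and D_approx: "near_max n D + real k * lam (B - D) < trunc k n B + e / 4"
    unfolding trunc_def by (rule ba_inf_approx[OF alg nonneg_fa_near_max nonneg_fa_scaled_lam B e])
  have "ba_inf A xi (\<lambda>C. real k * lam C) B \<le> xi D + real k * lam (B - D)"
    by (rule ba_inf_le[OF alg nonneg_fa_xi nonneg_fa_scaled_lam B D])
  moreover have "xi D < trunc_lim j D + e / 4"
    using xi_diff_trunc_lim_le[OF D(1), of j] j by linarith
  moreover have "trunc_lim j D < trunc j n D + e / 4"
    using abs_trunc_diff_lim_le[OF n(2) D(1), of j] N2[rule_format, OF order_refl]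
    unfolding abs_le_iff by linarith
  moreover have "trunc j n D \<le> near_max n D" by (rule trunc_le[OF D(1)])
  moreover have "trunc k n B < trunc_lim k B + e / 4"
    using abs_trunc_diff_lim_le[OF n(1) B, of k] N1[rule_format, OF order_refl]
    unfolding abs_le_iff by linarith
  ultimately show "ba_inf A xi (\<lambda>C. real k * lam C) B \<le> trunc_lim k B + e"
    using D_approx by linarith
qed

lemma ba_inf_xi: "B \<in> A \<Longrightarrow> ba_inf A xi (\<lambda>C. real k * lam C) B = trunc_lim k B"
  by (intro antisym ba_inf_xi_le_trunc_lim trunc_lim_le_ba_inf_xi)

lemma abs_cont_xi: "abs_cont A xi lam"
  unfolding abs_cont_def
proof (intro allI impI)
  fix \<epsilon> :: real assume "0 < \<epsilon>"
  then obtain j where j: "xi \<Omega> - trunc_lim j \<Omega> < \<epsilon> / 2"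
    using xi_diff_trunc_lim_less[of "\<epsilon> / 2"] by auto
  define \<delta> where "\<delta> = \<epsilon> / (2 * (real j + 1))"
  have \<delta>: "0 < \<delta>" "real j * \<delta> \<le> \<epsilon> / 2"
    using \<open>0 < \<epsilon>\<close> unfolding \<delta>_def by (auto simp: field_simps)
  have "tvar A xi B < \<epsilon>" if B: "B \<in> A" and small: "tvar A lam B < \<delta>" for B
  proof -
    have "real j * lam B \<le> real j * \<delta>"
      using small tvar_nonneg_fa[OF alg nonneg_fa_lam B] by (intro mult_left_mono) auto
    then show ?thesis
      using xi_diff_trunc_lim_le[OF B, of j] trunc_lim_le_lam[OF B, of j] j \<delta>(2)
        tvar_nonneg_fa[OF alg nonneg_fa_xi B] by linarith
  qed
  then show "\<exists>\<delta>>0. \<forall>B\<in>A. tvar A lam B < \<delta> \<longrightarrow> tvar A xi B < \<epsilon>" using \<delta>(1) by blast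
qed

lemma ba_norm_trunc_diff_tendsto:
  "(\<lambda>n. ba_norm \<Omega> A (\<lambda>B. ba_inf A xi (\<lambda>C. real k * lam C) B
      - ba_inf A (near_max n) (\<lambda>C. real k * lam C) B)) \<longlonglongrightarrow> 0"
proof (rule Lim_null_comparison[OF always_eventually[OF allI] trunc_bound_tendsto])
  fix n
  show "norm (ba_norm \<Omega> A (\<lambda>B. ba_inf A xi (\<lambda>C. real k * lam C) B
      - ba_inf A (near_max n) (\<lambda>C. real k * lam C) B)) \<le> trunc_bound k n"
    unfolding real_norm_def
  proof (rule abs_ba_norm_le[OF alg])
    fix P assume P: "alg_partition \<Omega> A P"
    have "(\<Sum>C\<in>P. \<bar>ba_inf A xi (\<lambda>C. real k * lam C) C - ba_inf A (near_max n) (\<lambda>C. real k * lam C) C\<bar>)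
        = (\<Sum>C\<in>P. \<bar>trunc k n C - trunc_lim k C\<bar>)"
      using alg_partitionD(2)[OF P] ba_inf_xi unfolding trunc_def
      by (intro sum.cong) (auto simp: abs_minus_commute)
    also have "\<dots> \<le> trunc_bound k n" by (rule sum_abs_trunc_diff_lim_le[OF order_refl P])
    finally show "(\<Sum>C\<in>P. \<bar>ba_inf A xi (\<lambda>C. real k * lam C) C
        - ba_inf A (near_max n) (\<lambda>C. real k * lam C) C\<bar>) \<le> trunc_bound k n" .
  qed
qed

lemma xi_le_liminf:
  assumes B: "B \<in> A"
  shows "ereal (xi B) \<le> liminf (\<lambda>n. ereal (near_max n B))"
proof (rule LIMSEQ_le_const2)
  show "(\<lambda>k. ereal (trunc_lim k B)) \<longlonglongrightarrow> ereal (xi B)"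
    using trunc_lim_tendsto_xi[OF B] by (simp add: lim_ereal)
  have "ereal (trunc_lim k B) \<le> liminf (\<lambda>n. ereal (near_max n B))" for k
  proof -
    have "liminf (\<lambda>n. ereal (trunc k n B)) = ereal (trunc_lim k B)"
      using trunc_tendsto[OF B] by (intro lim_imp_Liminf) (simp_all add: lim_ereal)
    moreover have "liminf (\<lambda>n. ereal (trunc k n B)) \<le> liminf (\<lambda>n. ereal (near_max n B))"
      using trunc_le[OF B] by (intro Liminf_mono) simp
    ultimately show ?thesis by simp
  qed
  then show "\<exists>N. \<forall>k\<ge>N. ereal (trunc_lim k B) \<le> liminf (\<lambda>n. ereal (near_max n B))" by blast
qed

lemma ac_limit_of_tail_combinations:
  "\<exists>\<xi> m. \<xi> \<in> ba_ac_pos \<Omega> A lam \<and> (\<forall>n. m n \<in> tail_co \<mu> n) \<and>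
     (\<forall>k::nat. (\<lambda>n. ba_norm \<Omega> A (\<lambda>B. ba_inf A \<xi> (\<lambda>C. real k * lam C) B
                                    - ba_inf A (m n) (\<lambda>C. real k * lam C) B)) \<longlonglongrightarrow> 0) \<and>
     (\<forall>B\<in>A. ereal (\<xi> B) \<le> liminf (\<lambda>n. ereal (m n B)))"
  using ba_pos_iff_nonneg_fa[OF alg] nonneg_fa_xi abs_cont_xi near_max_in_tail
    ba_norm_trunc_diff_tendsto xi_le_liminf
  unfolding ba_ac_pos_def by blast

end

theorem mainTheorem13:
  fixes \<Omega> :: "'a set" and A :: "'a set set" and \<mu> :: "nat \<Rightarrow> 'a set \<Rightarrow> real"
  assumes "algebra \<Omega> A"
    and "\<And>n. \<mu> n \<in> ba_pos \<Omega> A"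
    and "\<exists>K. \<forall>n. ba_norm \<Omega> A (\<mu> n) \<le> K"
  defines "lam \<equiv> (\<lambda>B. \<Sum>n. \<mu> n B / 2 ^ n)"
  shows "\<exists>\<xi> m. \<xi> \<in> ba_ac_pos \<Omega> A lam \<and> (\<forall>n. m n \<in> tail_co \<mu> n) \<and>
     (\<forall>k::nat. (\<lambda>n. ba_norm \<Omega> A (\<lambda>B. ba_inf A \<xi> (\<lambda>C. real k * lam C) B
                                    - ba_inf A (m n) (\<lambda>C. real k * lam C) B)) \<longlonglongrightarrow> 0) \<and>
     (\<forall>B\<in>A. ereal (\<xi> B) \<le> liminf (\<lambda>n. ereal (m n B)))"
proof -
  obtain K where K: "\<And>n. ba_norm \<Omega> A (\<mu> n) \<le> K" using assms(3) by blast
  have nonneg: "nonneg_fa A (\<mu> n)" for n using assms(2) ba_pos_iff_nonneg_fa[OF assms(1)] by blast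
  have "\<mu> n \<Omega> \<le> K" for n
    using K[of n] tvar_nonneg_fa[OF assms(1) nonneg algebra.top[OF assms(1)]]
    unfolding ba_norm_def by simp
  then interpret S: bounded_nonneg_fa_seq \<Omega> A \<mu> K
    using assms(1) nonneg by (simp add: bounded_nonneg_fa_seq_def)
  have "lam = S.lam" unfolding assms(4) S.lam_def ..
  then show ?thesis using S.ac_limit_of_tail_combinations by simp
qed

end
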